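(* Let $(x_n)_{n\in\mathbb{N}}$ be a sequence in $[0,1)$ with the following property: there exist a constant $\kappa>0$, a strictly increasing sequence $N_1<N_2<\ldots$ of positive integers, and for each $i\ge1$ an $LS$-sequence of points $(y^{(i)}_n)_{n\in\mathbb{N}}$ such that $$\left|\{x_1,\ldots,x_{N_i}\}\cap\{y^{(i)}_1,\ldots,y^{(i)}_{N_i}\}\right|\ge \kappa N_i.$$ Then $(x_n)_{n\in\mathbb{N}}$ does not have Poissonian pair correlations.
   Context: $\|x\|$ denotes the distance from $x$ to the nearest integer. A sequence $(x_n)_{n\in\mathbb{N}}$ in $[0,1)$ has Poissonian pair correlations if for every $s \geq 0$, $F_N(s) := \frac{1}{N}\#\{1 \leq l \neq m \leq N : \|x_l - x_m\| \leq s/N\} \to 2s$ as $N\to\infty$. $LS$-sequences: Let $L\in\mathbb{N}$, $S\in\mathbb{N}_0$ with $L+S\ge 2$, and let $\beta\in(0,1)$ be the solution of $L\beta+S\beta^2=1$. Let $\rho_{L,S}$ be the partition of $[0,1)$ into $L+S$ consecutive intervals, the first $L$ of length $\beta$ and the following $S$ of length $\beta^2$. For a partition $\pi$ of $[0,1)$, its $\rho$-refinement $\rho\pi$ is obtained by subdividing every interval of maximal length of $\pi$ positively homothetically to $\rho$. The $LS$-sequence of partitions is $(\rho_{L,S}^n\pi)_{n\in\mathbb{N}}$ with $\pi=\{[0,1)\}$; $\rho_{L,S}^n\pi$ consists of $t_n$ intervals, of which $l_n$ have the maximal length $\beta^n$. The $LS$-sequence of points: $\Lambda^1_{L,S}$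 is the list of the $t_1$ left endpoints of $\rho_{L,S}\pi$ ordered by magnitude; given $\Lambda^n_{L,S}=\{\xi^1,\ldots,\xi^{t_n}\}$ (ordered), $\Lambda^{n+1}_{L,S}$ is $\xi^1,\ldots,\xi^{t_n}$, followed by $\psi^{n+1}_{1,0}(\xi^1),\ldots,\psi^{n+1}_{1,0}(\xi^{l_n}),\ldots,\psi^{n+1}_{L,0}(\xi^1),\ldots,\psi^{n+1}_{L,0}(\xi^{l_n})$, followed by $\psi^{n+1}_{L,1}(\xi^1),\ldots,\psi^{n+1}_{L,1}(\xi^{l_n}),\ldots,\psi^{n+1}_{L,S-1}(\xi^1),\ldots,\psi^{n+1}_{L,S-1}(\xi^{l_n})$, where $\psi^n_{i,j}(x)=x+i\beta^n+j\beta^{n+1}$. An $LS$-sequence of points is the sequence whose first $t_n$ terms are $\Lambda^n_{L,S}$ for all $n$. *)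

theory Defs
  imports Complex_Main
begin

definition dist_int :: "real \<Rightarrow> real" where
  "dist_int x = min (x - real_of_int \<lfloor>x\<rfloor>) (real_of_int \<lceil>x\<rceil> - x)"

text \<open>Pair correlation function (sequences are indexed from 1, as in the paper).\<close>
definition pair_corr :: "(nat \<Rightarrow> real) \<Rightarrow> real \<Rightarrow> nat \<Rightarrow> real" where
  "pair_corr x s N = real (card {(l, m). l \<in> {1..N} \<and> m \<in> {1..N} \<and> l \<noteq> m \<and>
        dist_int (x l - x m) \<le> s / real N}) / real N"

definition poissonian_pair_corr :: "(nat \<Rightarrow> real) \<Rightarrow> bool" where
  "poissonian_pair_corr x \<longleftrightarrow> (\<forall>s\<ge>0. (\<lambda>N. pair_corr x s N) \<longlonglongrightarrow> 2 * s)"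

definition LS_beta :: "nat \<Rightarrow> nat \<Rightarrow> real" where
  "LS_beta L S = (THE b. 0 < b \<and> b < 1 \<and> real L * b + real S * b ^ 2 = 1)"

text \<open>Partitions of [0,1) as lists of intervals, each given by (left endpoint, length),
  listed in increasing order. The rho-refinement subdivides each interval of maximal
  length positively homothetically to rho_{L,S}.\<close>
definition max_len :: "(real \<times> real) list \<Rightarrow> real" where
  "max_len P = Max (set (map snd P))"

definition LS_refine :: "nat \<Rightarrow> nat \<Rightarrow> (real \<times> real) list \<Rightarrow> (real \<times> real) list" where
  "LS_refine L S P =
     (let b = LS_beta L S; m = max_len P in
      concat (map (\<lambda>(a, d). if d = m then
          map (\<lambda>i. (a + real i * b * d, b * d)) [0..<L]
          @ map (\<lambda>j. (a + real L * b * d + real j * b ^ 2 * d, b ^ 2 * d)) [0..<S]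
        else [(a, d)]) P))"

fun LS_partition :: "nat \<Rightarrow> nat \<Rightarrow> nat \<Rightarrow> (real \<times> real) list" where
  "LS_partition L S 0 = [(0, 1)]"
| "LS_partition L S (Suc n) = LS_refine L S (LS_partition L S n)"

definition LS_t :: "nat \<Rightarrow> nat \<Rightarrow> nat \<Rightarrow> nat" where
  "LS_t L S n = length (LS_partition L S n)"

definition LS_l :: "nat \<Rightarrow> nat \<Rightarrow> nat \<Rightarrow> nat" where
  "LS_l L S n = length (filter (\<lambda>(a, d). d = max_len (LS_partition L S n)) (LS_partition L S n))"

definition LS_psi :: "nat \<Rightarrow> nat \<Rightarrow> nat \<Rightarrow> nat \<Rightarrow> nat \<Rightarrow> real \<Rightarrow> real" where
  "LS_psi L S n i j x = x + real i * LS_beta L S ^ n + real j * LS_beta L S ^ (n + 1)"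

text \<open>Lambda^n_{L,S} (meaningful for n >= 1). The new points in step n+1 are
  psi_{i,0} for i = 1..L-1 and psi_{L,j} for j = 0..S-1, applied to the first l_n
  points of Lambda^n (for S >= 1 this is the same as psi_{i,0}, i=1..L, followed by
  psi_{L,j}, j=1..S-1).\<close>
fun LS_Lambda :: "nat \<Rightarrow> nat \<Rightarrow> nat \<Rightarrow> real list" where
  "LS_Lambda L S 0 = []"
| "LS_Lambda L S (Suc n) =
     (if n = 0 then sort (map fst (LS_partition L S 1))
      else (let \<Lambda> = LS_Lambda L S n; \<xi>s = take (LS_l L S n) \<Lambda> in
        \<Lambda>
        @ concat (map (\<lambda>i. map (LS_psi L S (Suc n) i 0) \<xi>s) [1..<L])
        @ concat (map (\<lambda>j. map (LS_psi L S (Suc n) L j) \<xi>s) [0..<S])))"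

definition is_LS_sequence :: "(nat \<Rightarrow> real) \<Rightarrow> bool" where
  "is_LS_sequence y \<longleftrightarrow> (\<exists>L S. L \<ge> 1 \<and> L + S \<ge> 2 \<and>
      (\<forall>n\<ge>1. \<forall>k < LS_t L S n. y (k + 1) = LS_Lambda L S n ! k))"

end

theory Submission
  imports Defs "HOL-Library.FuncSet"
begin

text \<open>An initial segment of an LS-sequence has at most four distinct distances between neighbouring
  points: the two lengths \<open>\<beta>\<^sup>n\<^sup>+\<^sup>1\<close> and \<open>\<beta>\<^sup>n\<^sup>+\<^sup>2\<close> of the pieces produced by the current refinement,
  and two distances at the end of the block of new points that is being generated. Let a
  proportion \<open>\<kappa>\<close> of \<open>x\<^sub>1, \<dots>, x\<^sub>N\<close> lie in such a set \<open>Y\<close>. The distance between two neighbours of the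
  common part \<open>C\<close> is the sum of the neighbour distances of \<open>Y\<close> between them. For a suitable
  decreasing sequence of scales \<open>\<sigma>\<^sub>j\<close>, one of the five windows \<open>[\<sigma>\<^sub>j\<^sub>+\<^sub>1, \<sigma>\<^sub>j)\<close>, \<open>j \<le> 4\<close>, contains no
  scaled distance \<open>N g\<close> of \<open>Y\<close>. For most neighbouring pairs of \<open>C\<close> the distances below \<open>\<sigma>\<^sub>j\<^sub>+\<^sub>1\<close> add
  up to less than \<open>\<eta>\<^sub>j\<close>, while the distances of size at least \<open>\<sigma>\<^sub>j\<close> add up to one of at most \<open>K\<^sub>j\<close>
  values. By the pigeonhole principle \<open>4 \<eta>\<^sub>j N\<close> pairs have scaled distances in a common window of
  width \<open>\<eta>\<^sub>j\<close>, so \<open>F\<^sub>N\<close> increases by at least \<open>4 \<eta>\<^sub>j\<close> over an interval of length \<open>3 \<eta>\<^sub>j / 2\<close> taken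
  from a finite grid. Poissonian pair correlations would make this increase close to \<open>3 \<eta>\<^sub>j\<close> for
  all large \<open>N\<close>.\<close>

section \<open>Neighbouring points of a finite set\<close>

definition neighbours :: "'a::linorder set \<Rightarrow> ('a \<times> 'a) set" where
  "neighbours A = {(p, q). p \<in> A \<and> q \<in> A \<and> p < q \<and> (\<forall>z \<in> A. \<not> (p < z \<and> z < q))}"

lemma neighbours_subsingleton: "A \<subseteq> {a} \<Longrightarrow> neighbours A = {}"
  by (auto simp: neighbours_def)

lemma neighbours_subset: "neighbours A \<subseteq> A \<times> A"
  by (auto simp: neighbours_def)

lemma finite_neighbours: "finite A \<Longrightarrow> finite (neighbours A)"
  using neighbours_subset by (rule finite_subset) simp

lemma neighbours_insert_greater:
  fixes A :: "'a::linorder set"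
  assumes "finite A" "A \<noteq> {}" "\<forall>a \<in> A. a < b"
  shows "neighbours (insert b A) = insert (Max A, b) (neighbours A)"
proof -
  have "(p, b) \<in> neighbours (insert b A) \<longleftrightarrow> p \<in> A \<and> (\<forall>z \<in> A. \<not> p < z)" for p
    using assms(3) by (auto simp: neighbours_def)
  also have "p \<in> A \<and> (\<forall>z \<in> A. \<not> p < z) \<longleftrightarrow> p = Max A" for p
    using Max_in[OF assms(1,2)] Max_ge[OF assms(1)] by (metis antisym not_le)
  finally have "(p, b) \<in> neighbours (insert b A) \<longleftrightarrow> p = Max A" for p .
  moreover have "(p, q) \<in> neighbours (insert b A) \<longleftrightarrow> (p, q) \<in> neighbours A" if "q \<noteq> b" for p q
    using assms that by (auto simp: neighbours_def)
  moreover have "(p, b) \<notin> neighbours A" for p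
    using assms(3) neighbours_subset by blast
  ultimately have "(p, q) \<in> neighbours (insert b A) \<longleftrightarrow> (p, q) = (Max A, b) \<or> (p, q) \<in> neighbours A"
    for p q by (cases "q = b") auto
  then show ?thesis by auto
qed

lemma neighbours_telescope:
  fixes A :: "'a::linordered_ab_group_add set"
  assumes "finite A" "A \<noteq> {}"
  shows "card (neighbours A) = card A - 1 \<and> (\<Sum>(p, q) \<in> neighbours A. q - p) = Max A - Min A"
  using assms
proof (induction A rule: finite_linorder_max_induct)
  case (insert b A)
  show ?case
  proof (cases "A = {}")
    case True
    then show ?thesis by (simp add: neighbours_subsingleton)
  next
    case False
    have "(Max A, b) \<notin> neighbours A" using neighbours_subset insert.hyps(2) by blast
    moreover have "b \<notin> A" using insert.hyps(2) by blast
    moreover have "Min (insert b A) = Min A"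
    proof -
      have "Min A < b" using Min_in[OF insert.hyps(1) False] insert.hyps(2) by blast
      then show ?thesis using Min_insert[OF insert.hyps(1) False, of b] by simp
    qed
    moreover have "Max (insert b A) = b"
      using insert.hyps(1,2) by (intro Max_insert2) auto
    moreover have "0 < card A" using insert.hyps(1) False by (simp add: card_gt_0_iff)
    ultimately show ?thesis
      using insert False
      by (simp add: neighbours_insert_greater finite_neighbours card_insert_if Suc_pred[OF \<open>0 < card A\<close>])
  qed
qed simp

lemma card_neighbours_le:
  fixes A :: "'a::linordered_ab_group_add set"
  assumes "finite A"
  shows "card (neighbours A) \<le> card A"
proof (cases "A = {}")
  case False
  then show ?thesis using neighbours_telescope[OF assms False] by simp
qed (simp add: neighbours_def)

lemma neighbours_segment_subset: "neighbours (Y \<inter> {p..q}) \<subseteq> neighbours Y"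
  by (fastforce simp: neighbours_def)

lemma neighbours_segment_telescope:
  fixes Y :: "'a::linordered_ab_group_add set"
  assumes "finite Y" "p \<in> Y" "q \<in> Y" "p < q"
  shows "(\<Sum>(a, b) \<in> neighbours (Y \<inter> {p..q}). b - a) = q - p"
proof -
  have "Min (Y \<inter> {p..q}) = p" "Max (Y \<inter> {p..q}) = q"
    using assms by (auto intro!: Min_eqI Max_eqI)
  moreover have "Y \<inter> {p..q} \<noteq> {}" using assms by auto
  ultimately show ?thesis using assms neighbours_telescope[of "Y \<inter> {p..q}"] by simp
qed

lemma neighbours_segments_disjoint:
  assumes "C \<subseteq> Y" "e \<in> neighbours C" "e' \<in> neighbours C"
    and "g \<in> neighbours (Y \<inter> {fst e..snd e})" "g \<in> neighbours (Y \<inter> {fst e'..snd e'})"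
  shows "e = e'"
proof -
  obtain p q p' q' where e: "e = (p, q)" "e' = (p', q')" by force
  have inside: "p \<le> fst g" "fst g < snd g" "snd g \<le> q" "p' \<le> fst g" "snd g \<le> q'"
    using assms(4,5) by (auto simp: neighbours_def e)
  have "p = p'"
  proof (rule ccontr)
    assume "p \<noteq> p'"
    then consider "p < p'" | "p' < p" by (rule linorder_neqE)
    then show False
    proof cases
      case 1
      then have "p' < q" using inside by (meson le_less_trans less_le_trans)
      then show False using assms(2,3) 1 by (auto simp: neighbours_def e)
    next
      case 2
      then have "p < q'" using inside by (meson le_less_trans less_le_trans)
      then show False using assms(2,3) 2 by (auto simp: neighbours_def e)
    qed
  qed
  moreover have "q = q'"
  proof (rule ccontr)
    assume "q \<noteq> q'"
    then consider "q < q'" | "q' < q" by (rule linorder_neqE)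
    then show False using assms(2,3) \<open>p = p'\<close> by cases (auto simp: neighbours_def e)
  qed
  ultimately show ?thesis using e by simp
qed

lemma sum_card_neighbours_segments_le:
  fixes Y :: "'a::linordered_ab_group_add set"
  assumes "finite Y" "C \<subseteq> Y"
  shows "(\<Sum>e \<in> neighbours C. card (neighbours (Y \<inter> {fst e..snd e}))) \<le> card Y"
proof -
  have fin: "finite C" using assms finite_subset by blast
  have "(\<Sum>e \<in> neighbours C. card (neighbours (Y \<inter> {fst e..snd e})))
      = card (\<Union>e \<in> neighbours C. neighbours (Y \<inter> {fst e..snd e}))"
    using neighbours_segments_disjoint[OF assms(2)] assms(1) fin
    by (intro card_UN_disjoint[symmetric]) (auto simp: finite_neighbours)
  also have "\<dots> \<le> card (neighbours Y)"
    using neighbours_segment_subset assms(1) by (intro card_mono) (auto simp: finite_neighbours)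
  also have "\<dots> \<le> card Y" using assms(1) by (rule card_neighbours_le)
  finally show ?thesis .
qed

lemma card_threshold_le_sum:
  fixes f :: "'a \<Rightarrow> real"
  assumes "finite P" and "\<forall>k \<in> P. 0 \<le> f k"
  shows "T * real (card {k \<in> P. T \<le> f k}) \<le> (\<Sum>k \<in> P. f k)"
proof -
  have "T * real (card {k \<in> P. T \<le> f k}) = (\<Sum>k \<in> {k \<in> P. T \<le> f k}. T)" by simp
  also have "\<dots> \<le> (\<Sum>k \<in> {k \<in> P. T \<le> f k}. f k)" by (rule sum_mono) simp
  also have "\<dots> \<le> (\<Sum>k \<in> P. f k)" using assms by (intro sum_mono2) auto
  finally show ?thesis .
qed

lemma pigeonhole_fibre:
  assumes "finite A" "finite V" "f ` A \<subseteq> V" "card V \<le> K"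
  obtains v where "card A \<le> K * card {a \<in> A. f a = v}"
proof (cases "A = {}")
  case False
  then obtain a where "a \<in> A" by blast
  have "card A = (\<Sum>v \<in> V. card {a \<in> A. f a = v})"
    using card_eq_sum sum.group[OF assms(1-3), of "\<lambda>_. 1 :: nat"] by simp
  also have "\<dots> \<le> (\<Sum>v \<in> V. Max ((\<lambda>v. card {a \<in> A. f a = v}) ` V))"
    using assms(2) by (intro sum_mono Max_ge) auto
  also have "\<dots> \<le> K * Max ((\<lambda>v. card {a \<in> A. f a = v}) ` V)"
    using assms(4) by simp
  finally have "card A \<le> K * Max ((\<lambda>v. card {a \<in> A. f a = v}) ` V)" .
  moreover have "V \<noteq> {}" using \<open>a \<in> A\<close> assms(3) by blast
  then have "Max ((\<lambda>v. card {a \<in> A. f a = v}) ` V) \<in> (\<lambda>v. card {a \<in> A. f a = v}) ` V"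
    using assms(2) by (intro Max_in) auto
  then obtain v where "Max ((\<lambda>v. card {a \<in> A. f a = v}) ` V) = card {a \<in> A. f a = v}"
    by blast
  ultimately show thesis using that by simp
qed (use that in simp)

definition bounded_combinations :: "real set \<Rightarrow> nat \<Rightarrow> real set" where
  "bounded_combinations W B = (\<lambda>c. \<Sum>v \<in> W. v * real (c v)) ` (W \<rightarrow>\<^sub>E {0..B})"

lemma card_bounded_combinations:
  assumes "finite W"
  shows "card (bounded_combinations W B) \<le> (B + 1) ^ card W"
proof -
  have "card (bounded_combinations W B) \<le> card (W \<rightarrow>\<^sub>E {0..B})"
    unfolding bounded_combinations_def using assms by (intro card_image_le finite_PiE) auto
  also have "\<dots> = (B + 1) ^ card W" using assms by (simp add: card_PiE)
  finally show ?thesis .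
qed

lemma finite_bounded_combinations: "finite W \<Longrightarrow> finite (bounded_combinations W B)"
  unfolding bounded_combinations_def by (simp add: finite_PiE)

lemma sum_in_bounded_combinations:
  fixes g :: "'a \<Rightarrow> real"
  assumes "finite F" "finite W" "g ` F \<subseteq> W" "0 < \<sigma>" "\<forall>i \<in> F. \<sigma> \<le> g i" "sum g F \<le> T"
  shows "sum g F \<in> bounded_combinations W (nat \<lfloor>T / \<sigma>\<rfloor>)"
proof -
  define c where "c v = card {i \<in> F. g i = v}" for v
  have sum_eq: "sum g F = (\<Sum>v \<in> W. v * real (c v))"
    unfolding c_def using sum.group[OF assms(1-3), of g] by (simp add: mult.commute)
  have "c v \<le> nat \<lfloor>T / \<sigma>\<rfloor>" if "v \<in> W" for v
  proof -
    have "\<sigma> * real (c v) = (\<Sum>i \<in> {i \<in> F. g i = v}. \<sigma>)" by (simp add: c_def)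
    also have "\<dots> \<le> (\<Sum>i \<in> {i \<in> F. g i = v}. g i)" using assms(5) by (intro sum_mono) auto
    also have "\<dots> \<le> sum g F"
      using assms(1,4,5) by (intro sum_mono2) (auto intro: order_trans[of 0 \<sigma>] less_imp_le)
    finally have "real (c v) \<le> T / \<sigma>" using assms(4,6) by (simp add: field_simps)
    then show ?thesis by (simp add: le_nat_floor)
  qed
  then have "restrict c W \<in> W \<rightarrow>\<^sub>E {0..nat \<lfloor>T / \<sigma>\<rfloor>}" by auto
  moreover have "sum g F = (\<Sum>v \<in> W. v * real (restrict c W v))" using sum_eq by simp
  ultimately show ?thesis unfolding bounded_combinations_def by blast
qed

lemma exists_level_avoiding:
  fixes \<sigma> :: "nat \<Rightarrow> 'a::linorder"
  assumes "decseq \<sigma>" "finite V" "card V \<le> n"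
  shows "\<exists>j \<le> n. \<forall>v \<in> V. v < \<sigma> (Suc j) \<or> \<sigma> j \<le> v"
proof (rule ccontr)
  assume "\<not> ?thesis"
  then have "\<forall>j \<in> {0..n}. \<exists>v. v \<in> V \<and> \<sigma> (Suc j) \<le> v \<and> v < \<sigma> j" by (fastforce simp: not_less not_le)
  then obtain f where f: "\<And>j. j \<in> {0..n} \<Longrightarrow> f j \<in> V \<and> \<sigma> (Suc j) \<le> f j \<and> f j < \<sigma> j"
    by metis
  have "inj_on f {0..n}"
  proof (rule inj_onI, rule ccontr)
    fix i j assume ij: "i \<in> {0..n}" "j \<in> {0..n}" "f i = f j" "i \<noteq> j"
    have less_if: "f j < f i" if "i < j" "i \<in> {0..n}" "j \<in> {0..n}" for i j
      using f[OF that(2)] f[OF that(3)] decseqD[OF assms(1), of "Suc i" j] that(1)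
      by (meson Suc_leI less_le_trans)
    show False
      using ij less_if[of i j] less_if[of j i] by (cases i j rule: linorder_cases) auto
  qed
  then have "card {0..n} \<le> card V"
    using f assms(2) by (intro card_inj_on_le) auto
  then show False using assms(3) by simp
qed

lemma index_block_cases:
  fixes l r k j j' :: nat
  assumes "j' < l" and "r \<le> k * l + j'" and "k = 0 \<or> (k - 1) * l + j < r"
  shows "k = r div l \<or> k = Suc (r div l)"
proof -
  have "r div l \<le> k"
  proof -
    have "r < Suc k * l" using assms(1,2) by simp
    then show ?thesis using less_mult_imp_div_less[of r "Suc k" l] by simp
  qed
  moreover have "k \<le> Suc (r div l)"
  proof (cases "k = 0")
    case False
    then have "(k - 1) * l \<le> r" using assms(3) by linarith
    then have "(k - 1) * l div l \<le> r div l" by (rule div_le_mono)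
    then have "k - 1 \<le> r div l" using assms(1) by simp
    then show ?thesis by linarith
  qed simp
  ultimately show ?thesis by linarith
qed

lemma set_take_concat_equal_length:
  assumes "\<forall>xs \<in> set xss. length xs = m"
  shows "set (take r (concat xss)) = {xss ! i ! j | i j. i < length xss \<and> j < m \<and> i * m + j < r}"
  using assms
proof (induction xss arbitrary: r)
  case (Cons xs xss)
  have m: "length xs = m" using Cons.prems by simp
  have "set (take r (concat (xs # xss))) = set (take r xs) \<union> set (take (r - m) (concat xss))"
    using m by simp
  also have "set (take r xs) = {xs ! j | j. j < m \<and> j < r}"
    using m by (force simp: set_conv_nth)
  also have "set (take (r - m) (concat xss)) =
      {xss ! i ! j | i j. i < length xss \<and> j < m \<and> i * m + j < r - m}"
    using Cons by simp
  also have "{xs ! j | j. j < m \<and> j < r} \<union> \<dots> =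
      {(xs # xss) ! i ! j | i j. i < length (xs # xss) \<and> j < m \<and> i * m + j < r}"
    (is "?A \<union> ?B = ?C")
  proof
    show "?A \<union> ?B \<subseteq> ?C"
    proof
      fix y assume "y \<in> ?A \<union> ?B"
      then consider j where "j < m" "j < r" "y = xs ! j"
        | i j where "i < length xss" "j < m" "i * m + j < r - m" "y = xss ! i ! j"
        by blast
      then show "y \<in> ?C"
      proof cases
        case (1 j)
        then show ?thesis by (intro CollectI exI[of _ 0] exI[of _ j]) simp
      next
        case (2 i j)
        then show ?thesis by (intro CollectI exI[of _ "Suc i"] exI[of _ j]) simp
      qed
    qed
    show "?C \<subseteq> ?A \<union> ?B"
    proof
      fix y assume "y \<in> ?C"
      then obtain i j where ij: "i < length (xs # xss)" "j < m" "i * m + j < r" "y = (xs # xss) ! i ! j"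
        by blast
      show "y \<in> ?A \<union> ?B"
      proof (cases i)
        case 0
        then show ?thesis using ij by auto
      next
        case (Suc i')
        then have "y \<in> ?B" using ij by (intro CollectI exI[of _ i'] exI[of _ j]) simp
        then show ?thesis ..
      qed
    qed
  qed
  finally show ?case .
qed simp

lemma image_eq_set_take:
  assumes "N \<le> length xs" and "\<And>k. k < N \<Longrightarrow> y (Suc k) = xs ! k"
  shows "y ` {1..N} = set (take N xs)"
proof -
  have "{1..N} = Suc ` {0..<N}" by (simp add: atLeastLessThanSuc_atLeastAtMost)
  then have "y ` {1..N} = (\<lambda>k. y (Suc k)) ` {0..<N}" by (simp only: image_image)
  also have "\<dots> = nth xs ` {0..<N}" using assms(2) by (intro image_cong) auto
  also have "\<dots> = set (take N xs)" using assms(1) by (rule nth_image)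
  finally show ?thesis .
qed

lemma strict_mono_eventually_witness:
  fixes r :: "nat \<Rightarrow> nat"
  assumes "strict_mono r" and "eventually P sequentially"
  obtains i where "P (r i)"
proof -
  have "eventually (\<lambda>i. P (r i)) sequentially"
    using assms filterlim_subseq unfolding filterlim_iff by blast
  then show thesis using that eventually_happens'[OF sequentially_bot] by blast
qed

section \<open>Tilings of an interval\<close>

fun tiling :: "real \<Rightarrow> (real \<times> real) list \<Rightarrow> real \<Rightarrow> bool" where
  "tiling a [] b \<longleftrightarrow> a = b"
| "tiling a (c # P) b \<longleftrightarrow> fst c = a \<and> 0 < snd c \<and> tiling (a + snd c) P b"

lemma tiling_append: "tiling a (P @ Q) b \<longleftrightarrow> (\<exists>m. tiling a P m \<and> tiling m Q b)"
  by (induction P arbitrary: a) auto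

lemma tiling_concat_map:
  assumes "tiling a P b" and "\<And>c. c \<in> set P \<Longrightarrow> tiling (fst c) (f c) (fst c + snd c)"
  shows "tiling a (concat (map f P)) b"
  using assms by (induction P arbitrary: a) (auto simp: tiling_append)

lemma tiling_le: "tiling a P b \<Longrightarrow> a \<le> b"
  by (induction P arbitrary: a) (auto, fastforce)

lemma tiling_bounds:
  "tiling a P b \<Longrightarrow> c \<in> set P \<Longrightarrow> a \<le> fst c \<and> fst c + snd c \<le> b \<and> 0 < snd c"
proof (induction P arbitrary: a)
  case (Cons c' P)
  then show ?case using tiling_le[of "a + snd c'" P b] by (cases "c = c'") fastforce+
qed simp

lemma tiling_disjoint:
  assumes "tiling a P b" "c \<in> set P" "c' \<in> set P"
    and "fst c \<le> p" "p < fst c + snd c" "fst c' \<le> p" "p < fst c' + snd c'"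
  shows "c = c'"
  using assms
proof (induction P arbitrary: a)
  case (Cons e P)
  then have e: "tiling (a + snd e) P b" "fst e = a" by auto
  consider "c = e" "c' = e" | "c \<in> set P" "c' = e" | "c = e" "c' \<in> set P" | "c \<in> set P" "c' \<in> set P"
    using Cons.prems by auto
  then show ?case
  proof cases
    case 2
    then show ?thesis using tiling_bounds[OF e(1), of c] e(2) Cons.prems by force
  next
    case 3
    then show ?thesis using tiling_bounds[OF e(1), of c'] e(2) Cons.prems by force
  next
    case 4
    then show ?thesis using Cons.IH[OF e(1)] Cons.prems by blast
  qed simp
qed simp

lemma tiling_next:
  "tiling a P b \<Longrightarrow> c \<in> set P \<Longrightarrow> fst c + snd c = b \<or> (\<exists>c' \<in> set P. fst c' = fst c + snd c)"
proof (induction P arbitrary: a)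
  case (Cons e P)
  then show ?case by (cases "c = e"; cases P) auto
qed simp

lemma tiling_steps:
  assumes "\<And>k. f k < f (Suc k)"
  shows "tiling (a + f 0) (map (\<lambda>k. (a + f k, f (Suc k) - f k)) [0..<m]) (a + f m)"
  using assms by (induction m) (auto simp: tiling_append)

section \<open>Initial segments of LS-sequences have at most four gap lengths\<close>

lemma LS_beta:
  assumes "1 \<le> L" and "2 \<le> L + S"
  shows "0 < LS_beta L S" "LS_beta L S < 1" "real L * LS_beta L S + real S * LS_beta L S ^ 2 = 1"
proof -
  define f where "f b = real L * b + real S * b ^ 2" for b :: real
  have f_less: "f c < f c'" if "0 < c" "c < c'" for c c'
  proof -
    have "real S * c ^ 2 \<le> real S * c' ^ 2"
      using that by (intro mult_left_mono power_mono) auto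
    moreover have "real L * c < real L * c'" using assms(1) that by simp
    ultimately show ?thesis unfolding f_def by linarith
  qed
  have "continuous_on {0..1} f" unfolding f_def by (intro continuous_intros)
  moreover have "f 0 \<le> 1" "1 \<le> f 1" using assms(2) by (simp_all add: f_def)
  ultimately obtain b where b: "0 \<le> b" "b \<le> 1" "f b = 1" using IVT'[of f 0 1 1] by auto
  have "b \<noteq> 0" using b(3) by (auto simp: f_def)
  moreover have "b \<noteq> 1"
  proof
    assume "b = 1"
    then have "real L + real S = 1" using b(3) by (simp add: f_def)
    with assms(2) show False by linarith
  qed
  ultimately have sol: "0 < b \<and> b < 1 \<and> f b = 1" using b by auto
  have uniq: "c = b" if "0 < c \<and> c < 1 \<and> f c = 1" for c
    using f_less[of c b] f_less[of b c] that sol by (cases c b rule: linorder_cases) force+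
  have "LS_beta L S = b"
    using the_equality[of "\<lambda>c. 0 < c \<and> c < 1 \<and> f c = 1", OF sol uniq]
    unfolding LS_beta_def f_def by simp
  then show "0 < LS_beta L S" "LS_beta L S < 1" "real L * LS_beta L S + real S * LS_beta L S ^ 2 = 1"
    using sol by (simp_all add: f_def)
qed

locale LS_construction =
  fixes L S :: nat
  assumes L_pos: "1 \<le> L" and LS_ge_2: "2 \<le> L + S"
begin

definition \<beta> :: real where "\<beta> = LS_beta L S"

lemma \<beta>_pos: "0 < \<beta>" and \<beta>_less_1: "\<beta> < 1" and \<beta>_equation: "real L * \<beta> + real S * \<beta> ^ 2 = 1"
  using LS_beta[OF L_pos LS_ge_2] unfolding \<beta>_def by auto

lemma \<beta>_power_Suc_less: "\<beta> ^ Suc n < \<beta> ^ n"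
  using \<beta>_pos \<beta>_less_1 by simp

abbreviation part :: "nat \<Rightarrow> (real \<times> real) list" where
  "part n \<equiv> LS_partition L S n"

definition piece_len :: "nat \<Rightarrow> nat \<Rightarrow> real" where
  "piece_len n k = (if k < L then \<beta> ^ Suc n else \<beta> ^ Suc (Suc n))"

definition offset :: "nat \<Rightarrow> nat \<Rightarrow> real" where
  "offset n k = real (min k L) * \<beta> ^ Suc n + real (k - L) * \<beta> ^ Suc (Suc n)"

lemma offset_0 [simp]: "offset n 0 = 0"
  by (simp add: offset_def)

lemma offset_Suc: "offset n (Suc k) = offset n k + piece_len n k"
proof (cases "k < L")
  case True
  then have "min (Suc k) L = Suc k" "min k L = k" "Suc k - L = 0" "k - L = 0" by auto
  then show ?thesis using True by (simp add: offset_def piece_len_def algebra_simps)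
next
  case False
  then have "min (Suc k) L = L" "min k L = L" "Suc k - L = Suc (k - L)" by auto
  then show ?thesis using False by (simp add: offset_def piece_len_def algebra_simps)
qed

lemma piece_len_pos: "0 < piece_len n k"
  using \<beta>_pos by (simp add: piece_len_def)

lemma piece_len_eq_iff: "piece_len n k = \<beta> ^ Suc n \<longleftrightarrow> k < L"
  using \<beta>_power_Suc_less[of "Suc n"] unfolding piece_len_def by (cases "k < L") auto

lemma offset_less_Suc: "offset n k < offset n (Suc k)"
  using piece_len_pos by (simp add: offset_Suc)

lemma offset_strict_mono: "strict_mono (offset n)"
  unfolding strict_mono_Suc_iff by (simp add: offset_less_Suc)

lemma offset_less_iff [simp]: "offset n k < offset n k' \<longleftrightarrow> k < k'"
  using offset_strict_mono by (rule strict_mono_less)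

lemma offset_le_iff [simp]: "offset n k \<le> offset n k' \<longleftrightarrow> k \<le> k'"
  using offset_strict_mono by (rule strict_mono_less_eq)

lemma offset_nonneg: "0 \<le> offset n k"
  using offset_le_iff[of n 0 k] by simp

lemma offset_full: "offset n (L + S) = \<beta> ^ n"
proof -
  have "offset n (L + S) = \<beta> ^ n * (real L * \<beta> + real S * \<beta> ^ 2)"
    by (simp add: offset_def algebra_simps power2_eq_square)
  then show ?thesis using \<beta>_equation by simp
qed

lemma offset_less_full: "k < L + S \<Longrightarrow> offset n k < \<beta> ^ n"
  using offset_less_iff[of n k "L + S"] offset_full by simp

definition pieces :: "nat \<Rightarrow> real \<Rightarrow> (real \<times> real) list" where
  "pieces n a = map (\<lambda>k. (a + offset n k, piece_len n k)) [0..<L + S]"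

definition refine_cell :: "nat \<Rightarrow> real \<times> real \<Rightarrow> (real \<times> real) list" where
  "refine_cell n c = (if snd c = \<beta> ^ n then pieces n (fst c) else [c])"

lemma tiling_pieces: "tiling a (pieces n a) (a + \<beta> ^ n)"
proof -
  have "tiling (a + offset n 0) (map (\<lambda>k. (a + offset n k, offset n (Suc k) - offset n k)) [0..<L + S])
          (a + offset n (L + S))"
    by (rule tiling_steps) (rule offset_less_Suc)
  moreover have "(\<lambda>k. (a + offset n k, offset n (Suc k) - offset n k)) = (\<lambda>k. (a + offset n k, piece_len n k))"
    by (simp add: offset_Suc)
  ultimately show ?thesis by (simp add: pieces_def offset_full)
qed

lemma LS_refine_eq_concat_refine_cell:
  assumes "max_len P = \<beta> ^ n"
  shows "LS_refine L S P = concat (map (refine_cell n) P)"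
proof -
  have "map (\<lambda>i. (a + real i * \<beta> * \<beta> ^ n, \<beta> * \<beta> ^ n)) [0..<L]
        @ map (\<lambda>j. (a + real L * \<beta> * \<beta> ^ n + real j * \<beta> ^ 2 * \<beta> ^ n, \<beta> ^ 2 * \<beta> ^ n)) [0..<S]
      = pieces n a" for a
  proof -
    have "map (\<lambda>i. (a + real i * \<beta> * \<beta> ^ n, \<beta> * \<beta> ^ n)) [0..<L]
        = map (\<lambda>k. (a + offset n k, piece_len n k)) [0..<L]"
      by (rule map_cong) (simp_all add: offset_def piece_len_def)
    moreover have "map (\<lambda>j. (a + real L * \<beta> * \<beta> ^ n + real j * \<beta> ^ 2 * \<beta> ^ n, \<beta> ^ 2 * \<beta> ^ n)) [0..<S]
        = map (\<lambda>k. (a + offset n k, piece_len n k)) [L..<L + S]"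
      by (simp add: map_add_upt[of L S, symmetric, unfolded add.commute[of _ L]] offset_def
          piece_len_def power2_eq_square)
    ultimately show ?thesis
      by (simp add: pieces_def upt_add_eq_append[of 0 L S])
  qed
  then show ?thesis
    unfolding LS_refine_def Let_def assms \<beta>_def[symmetric]
    by (intro arg_cong[where f = concat] map_cong) (auto simp: refine_cell_def)
qed

definition partition_inv :: "nat \<Rightarrow> bool" where
  "partition_inv n \<longleftrightarrow> tiling 0 (part n) 1
     \<and> (\<forall>c \<in> set (part n). snd c = \<beta> ^ n \<or> snd c = \<beta> ^ Suc n)
     \<and> (\<exists>c \<in> set (part n). snd c = \<beta> ^ n)"

lemma max_len_eq:
  assumes "\<forall>c \<in> set P. snd c = \<beta> ^ n \<or> snd c = \<beta> ^ Suc n" and "\<exists>c \<in> set P. snd c = \<beta> ^ n"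
  shows "max_len P = \<beta> ^ n"
  unfolding max_len_def
proof (rule Max_eqI)
  show "y \<le> \<beta> ^ n" if "y \<in> set (map snd P)" for y
    using that assms(1) \<beta>_power_Suc_less[of n] by auto
  show "\<beta> ^ n \<in> set (map snd P)" using assms(2) by force
qed simp

lemma tiling_concat_refine_cell:
  assumes "tiling a P b"
  shows "tiling a (concat (map (refine_cell n) P)) b"
  using assms
proof (rule tiling_concat_map)
  fix c assume "c \<in> set P"
  then have "0 < snd c" using tiling_bounds[OF assms] by blast
  then show "tiling (fst c) (refine_cell n c) (fst c + snd c)"
    using tiling_pieces[of "fst c" n] by (simp add: refine_cell_def)
qed

lemma refine_cell_lengths:
  assumes "c' \<in> set (refine_cell n c)" and "snd c = \<beta> ^ n \<or> snd c = \<beta> ^ Suc n"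
  shows "snd c' = \<beta> ^ Suc n \<or> snd c' = \<beta> ^ Suc (Suc n)"
proof (cases "snd c = \<beta> ^ n")
  case True
  then obtain k where "snd c' = piece_len n k"
    using assms(1) by (auto simp: refine_cell_def pieces_def)
  then show ?thesis by (simp add: piece_len_def)
next
  case False
  then show ?thesis using assms by (simp add: refine_cell_def)
qed

lemma partition_inv_Suc:
  assumes "partition_inv n"
  shows "partition_inv (Suc n)"
proof -
  have "max_len (part n) = \<beta> ^ n" using assms max_len_eq unfolding partition_inv_def by auto
  then have part_Suc: "part (Suc n) = concat (map (refine_cell n) (part n))"
    by (simp add: LS_refine_eq_concat_refine_cell)
  have "tiling 0 (part (Suc n)) 1"
    unfolding part_Suc using assms by (intro tiling_concat_refine_cell) (simp add: partition_inv_def)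
  moreover have "\<forall>c \<in> set (part (Suc n)). snd c = \<beta> ^ Suc n \<or> snd c = \<beta> ^ Suc (Suc n)"
    using assms refine_cell_lengths unfolding part_Suc partition_inv_def by fastforce
  moreover have "\<exists>c \<in> set (part (Suc n)). snd c = \<beta> ^ Suc n"
  proof -
    obtain c where "c \<in> set (part n)" "snd c = \<beta> ^ n"
      using assms unfolding partition_inv_def by blast
    moreover have "(fst c + offset n 0, piece_len n 0) \<in> set (pieces n (fst c))"
      unfolding pieces_def set_map using L_pos by (intro imageI) simp
    ultimately have "(fst c, \<beta> ^ Suc n) \<in> set (part (Suc n))"
      using L_pos unfolding part_Suc by (auto simp: refine_cell_def piece_len_def)
    then show ?thesis by force
  qed
  ultimately show ?thesis unfolding partition_inv_def by blast
qed

lemma partition_inv: "partition_inv n"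
proof (induction n)
  case 0
  show ?case by (simp add: partition_inv_def)
qed (rule partition_inv_Suc)

lemma part_Suc: "part (Suc n) = concat (map (refine_cell n) (part n))"
  using partition_inv[of n] max_len_eq
  by (simp add: partition_inv_def LS_refine_eq_concat_refine_cell)

lemma tiling_part: "tiling 0 (part n) 1"
  using partition_inv[of n] by (simp add: partition_inv_def)

lemma part_lengths: "c \<in> set (part n) \<Longrightarrow> snd c = \<beta> ^ n \<or> snd c = \<beta> ^ Suc n"
  using partition_inv[of n] by (simp add: partition_inv_def)

lemma ex_maximal_cell: "\<exists>c \<in> set (part n). snd c = \<beta> ^ n"
  using partition_inv[of n] by (simp add: partition_inv_def)

lemma mem_refine_cell_iff:
  "c' \<in> set (refine_cell n c) \<longleftrightarrow>
     (snd c = \<beta> ^ n \<and> (\<exists>k < L + S. c' = (fst c + offset n k, piece_len n k)))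
     \<or> (snd c \<noteq> \<beta> ^ n \<and> c' = c)"
  by (auto simp: refine_cell_def pieces_def)

lemma mem_part_Suc_iff:
  "(a', d') \<in> set (part (Suc n)) \<longleftrightarrow>
     (\<exists>a k. (a, \<beta> ^ n) \<in> set (part n) \<and> k < L + S \<and> a' = a + offset n k \<and> piece_len n k = d')
     \<or> ((a', d') \<in> set (part n) \<and> d' = \<beta> ^ Suc n)"
proof -
  have not_maximal: "(a', d') \<in> set (part n) \<and> snd (a', d') \<noteq> \<beta> ^ n \<longleftrightarrow>
      (a', d') \<in> set (part n) \<and> d' = \<beta> ^ Suc n"
    using part_lengths[of "(a', d')" n] \<beta>_power_Suc_less[of n] by auto
  have "(a', d') \<in> set (part (Suc n)) \<longleftrightarrow> (\<exists>c \<in> set (part n). (a', d') \<in> set (refine_cell n c))"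
    unfolding part_Suc by simp
  also have "\<dots> \<longleftrightarrow> (\<exists>c \<in> set (part n). snd c = \<beta> ^ n \<and>
        (\<exists>k < L + S. (a', d') = (fst c + offset n k, piece_len n k)))
      \<or> ((a', d') \<in> set (part n) \<and> snd (a', d') \<noteq> \<beta> ^ n)"
    unfolding mem_refine_cell_iff by blast
  also have "(\<exists>c \<in> set (part n). snd c = \<beta> ^ n \<and>
        (\<exists>k < L + S. (a', d') = (fst c + offset n k, piece_len n k)))
      \<longleftrightarrow> (\<exists>a k. (a, \<beta> ^ n) \<in> set (part n) \<and> k < L + S \<and> a' = a + offset n k \<and> piece_len n k = d')"
  proof
    assume "\<exists>c \<in> set (part n). snd c = \<beta> ^ n \<and>
        (\<exists>k < L + S. (a', d') = (fst c + offset n k, piece_len n k))"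
    then obtain c k where "c \<in> set (part n)" "snd c = \<beta> ^ n" "k < L + S"
      "a' = fst c + offset n k" "d' = piece_len n k" by auto
    then show "\<exists>a k. (a, \<beta> ^ n) \<in> set (part n) \<and> k < L + S \<and> a' = a + offset n k \<and> piece_len n k = d'"
      by (intro exI[of _ "fst c"] exI[of _ k]) (metis prod.collapse)
  qed force
  finally show ?thesis unfolding not_maximal .
qed

lemma left_endpoint_part_Suc:
  assumes "(a, d) \<in> set (part n)"
  shows "(a, \<beta> ^ Suc n) \<in> set (part (Suc n))"
proof (cases "d = \<beta> ^ n")
  case True
  then show ?thesis
    using assms L_pos unfolding mem_part_Suc_iff piece_len_eq_iff
    by (intro disjI1 exI[of _ a] exI[of _ 0]) simp
next
  case False
  then show ?thesis using assms part_lengths[of "(a, d)" n] unfolding mem_part_Suc_iff by simp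
qed

lemma left_endpoints_part_Suc:
  "fst ` set (part (Suc n)) = fst ` set (part n)
     \<union> {a + offset n k | a k. (a, \<beta> ^ n) \<in> set (part n) \<and> 1 \<le> k \<and> k < L + S}"
  (is "?A = ?B \<union> ?C")
proof
  show "?A \<subseteq> ?B \<union> ?C"
  proof
    fix a' assume "a' \<in> ?A"
    then obtain d' where "(a', d') \<in> set (part (Suc n))" by force
    then consider a k where "(a, \<beta> ^ n) \<in> set (part n)" "k < L + S" "a' = a + offset n k"
      | "(a', d') \<in> set (part n)"
      unfolding mem_part_Suc_iff by blast
    then show "a' \<in> ?B \<union> ?C"
    proof cases
      case (1 a k)
      then show ?thesis by (cases "k = 0") force+
    qed force
  qed
  show "?B \<union> ?C \<subseteq> ?A"
  proof
    fix a' assume "a' \<in> ?B \<union> ?C"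
    then consider d where "(a', d) \<in> set (part n)"
      | a k where "(a, \<beta> ^ n) \<in> set (part n)" "k < L + S" "a' = a + offset n k"
      by force
    then show "a' \<in> ?A"
    proof cases
      case (1 d)
      then show ?thesis using left_endpoint_part_Suc by force
    next
      case (2 a k)
      then have "(a', piece_len n k) \<in> set (part (Suc n))" unfolding mem_part_Suc_iff by blast
      then show ?thesis by force
    qed
  qed
qed

lemma maximal_left_endpoints_part_Suc:
  "{a. (a, \<beta> ^ Suc n) \<in> set (part (Suc n))} = fst ` set (part n)
     \<union> {a + offset n k | a k. (a, \<beta> ^ n) \<in> set (part n) \<and> 1 \<le> k \<and> k < L}"
  (is "?A = ?B \<union> ?C")
proof
  show "?A \<subseteq> ?B \<union> ?C"
  proof
    fix a' assume "a' \<in> ?A"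
    then consider a k where "(a, \<beta> ^ n) \<in> set (part n)" "k < L" "a' = a + offset n k"
      | "(a', \<beta> ^ Suc n) \<in> set (part n)"
      unfolding mem_Collect_eq mem_part_Suc_iff piece_len_eq_iff by blast
    then show "a' \<in> ?B \<union> ?C"
    proof cases
      case (1 a k)
      then show ?thesis by (cases "k = 0") force+
    qed force
  qed
  show "?B \<union> ?C \<subseteq> ?A"
  proof
    fix a' assume "a' \<in> ?B \<union> ?C"
    then consider d where "(a', d) \<in> set (part n)"
      | a k where "(a, \<beta> ^ n) \<in> set (part n)" "k < L" "a' = a + offset n k"
      by force
    then show "a' \<in> ?A"
    proof cases
      case (1 d)
      then show ?thesis using left_endpoint_part_Suc by blast
    next
      case (2 a k)
      then show ?thesis unfolding mem_Collect_eq mem_part_Suc_iff piece_len_eq_iff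
        by (intro disjI1 exI[of _ a] exI[of _ k]) simp
    qed
  qed
qed

lemma length_refine_cell: "length (refine_cell n c) = (if snd c = \<beta> ^ n then L + S else 1)"
  by (simp add: refine_cell_def pieces_def)

lemma length_filter_refine_cell:
  assumes "snd c = \<beta> ^ n \<or> snd c = \<beta> ^ Suc n"
  shows "length (filter (\<lambda>c'. snd c' = \<beta> ^ Suc n) (refine_cell n c)) = (if snd c = \<beta> ^ n then L else 1)"
proof (cases "snd c = \<beta> ^ n")
  case True
  have "filter (\<lambda>k. piece_len n k = \<beta> ^ Suc n) [0..<L + S] = [0..<L]"
    unfolding piece_len_eq_iff upt_add_eq_append[OF le0] by (simp add: filter_id_conv)
  then show ?thesis using True by (simp add: refine_cell_def pieces_def filter_map comp_def)
next
  case False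
  then show ?thesis using assms \<beta>_power_Suc_less[of n] by (simp add: refine_cell_def del: power_Suc)
qed

lemma length_concat_refine_cell:
  "length (concat (map (refine_cell n) P)) = length P + (L + S - 1) * length (filter (\<lambda>c. snd c = \<beta> ^ n) P)"
  by (induction P) (use LS_ge_2 in \<open>auto simp: length_refine_cell simp del: power_Suc\<close>)

lemma length_filter_concat_refine_cell:
  assumes "\<forall>c \<in> set P. snd c = \<beta> ^ n \<or> snd c = \<beta> ^ Suc n"
  shows "length (filter (\<lambda>c. snd c = \<beta> ^ Suc n) (concat (map (refine_cell n) P)))
           = length P + (L - 1) * length (filter (\<lambda>c. snd c = \<beta> ^ n) P)"
  using assms
  by (induction P) (use L_pos in \<open>auto simp: length_filter_refine_cell simp del: power_Suc\<close>)

lemma LS_l_eq: "LS_l L S n = length (filter (\<lambda>c. snd c = \<beta> ^ n) (part n))"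
proof -
  have "max_len (part n) = \<beta> ^ n"
    using max_len_eq part_lengths ex_maximal_cell by blast
  then have "LS_l L S n = length (filter (\<lambda>(a, d). d = \<beta> ^ n) (part n))"
    unfolding LS_l_def by simp
  also have "(\<lambda>(a, d). d = \<beta> ^ n) = (\<lambda>c. snd c = \<beta> ^ n)" by auto
  finally show ?thesis .
qed

lemma LS_t_Suc: "LS_t L S (Suc n) = LS_t L S n + (L + S - 1) * LS_l L S n"
  unfolding LS_t_def LS_l_eq part_Suc by (rule length_concat_refine_cell)

lemma LS_l_Suc: "LS_l L S (Suc n) = LS_t L S n + (L - 1) * LS_l L S n"
  unfolding LS_t_def LS_l_eq[of "Suc n"] LS_l_eq[of n] part_Suc using part_lengths
  by (intro length_filter_concat_refine_cell) blast

lemma LS_l_pos: "0 < LS_l L S n"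
  using ex_maximal_cell[of n] unfolding LS_l_eq length_greater_0_conv filter_empty_conv by blast

lemma LS_t_ge: "n < LS_t L S n"
proof (induction n)
  case (Suc n)
  have "0 < (L + S - 1) * LS_l L S n" using LS_l_pos[of n] LS_ge_2 by simp
  then show ?case using Suc LS_t_Suc[of n] by linarith
qed (simp add: LS_t_def)

definition shifted_copies :: "nat \<Rightarrow> nat list \<Rightarrow> real list \<Rightarrow> real list" where
  "shifted_copies n ks \<xi>s = concat (map (\<lambda>k. map (\<lambda>\<xi>. \<xi> + offset n k) \<xi>s) ks)"

lemma shifted_copies_append:
  "shifted_copies n (ks @ ks') \<xi>s = shifted_copies n ks \<xi>s @ shifted_copies n ks' \<xi>s"
  by (simp add: shifted_copies_def)

lemma length_shifted_copies: "length (shifted_copies n ks \<xi>s) = length ks * length \<xi>s"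
  by (induction ks) (auto simp: shifted_copies_def)

lemma set_shifted_copies:
  "set (shifted_copies n ks \<xi>s) = {\<xi> + offset n k | \<xi> k. \<xi> \<in> set \<xi>s \<and> k \<in> set ks}"
  by (auto simp: shifted_copies_def)

lemma set_take_shifted_copies:
  "set (take r (shifted_copies n ks \<xi>s)) =
     {\<xi>s ! j + offset n (ks ! i) | i j. i < length ks \<and> j < length \<xi>s \<and> i * length \<xi>s + j < r}"
  unfolding shifted_copies_def
  by (subst set_take_concat_equal_length[where m = "length \<xi>s"]) (auto, (intro exI conjI; simp?)+)

text \<open>\<open>Lambda n\<close> is \<open>\<Lambda>\<^sup>n\<^sub>L\<^sub>,\<^sub>S\<close> for \<open>n \<ge> 1\<close> (see \<open>LS_Lambda_eq_Lambda\<close>); starting from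
  \<open>\<Lambda>\<^sup>0 = [0]\<close> makes the first step an instance of the general one.\<close>

fun Lambda :: "nat \<Rightarrow> real list" where
  "Lambda 0 = [0]"
| "Lambda (Suc n) = Lambda n @ shifted_copies n [1..<L + S] (take (LS_l L S n) (Lambda n))"

lemma upt_1_split: "[1..<L + S] = [1..<L] @ [L..<L + S]"
  using upt_add_eq_append[of 1 L S] L_pos by simp

lemma Lambda_invariant:
  "set (Lambda n) = fst ` set (part n) \<and> length (Lambda n) = LS_t L S n \<and> LS_l L S n \<le> LS_t L S n
     \<and> set (take (LS_l L S n) (Lambda n)) = {a. (a, \<beta> ^ n) \<in> set (part n)}"
proof (induction n)
  case 0
  have "LS_l L S 0 = 1" by (simp add: LS_l_eq)
  then show ?case by (auto simp: LS_t_def)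
next
  case (Suc n)
  define \<xi>s where "\<xi>s = take (LS_l L S n) (Lambda n)"
  have len: "length \<xi>s = LS_l L S n" and set_\<xi>s: "set \<xi>s = {a. (a, \<beta> ^ n) \<in> set (part n)}"
    using Suc unfolding \<xi>s_def by auto
  have Lambda_Suc: "Lambda (Suc n) = Lambda n @ shifted_copies n [1..<L] \<xi>s @ shifted_copies n [L..<L + S] \<xi>s"
    unfolding Lambda.simps upt_1_split shifted_copies_append \<xi>s_def by simp
  have "set (Lambda (Suc n)) = fst ` set (part (Suc n))"
    using Suc unfolding Lambda.simps \<xi>s_def[symmetric] left_endpoints_part_Suc
    by (simp only: set_append set_shifted_copies set_\<xi>s set_upt atLeastLessThan_iff mem_Collect_eq)
  moreover have "length (Lambda (Suc n)) = LS_t L S (Suc n)"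
    using Suc L_pos unfolding Lambda_Suc by (simp add: length_shifted_copies len LS_t_Suc algebra_simps)
  moreover have "LS_l L S (Suc n) \<le> LS_t L S (Suc n)"
    unfolding LS_t_Suc LS_l_Suc by (intro add_left_mono mult_right_mono) auto
  moreover have "take (LS_l L S (Suc n)) (Lambda (Suc n)) = Lambda n @ shifted_copies n [1..<L] \<xi>s"
    using Suc unfolding Lambda_Suc by (simp add: LS_l_Suc length_shifted_copies len)
  moreover have "set (Lambda n @ shifted_copies n [1..<L] \<xi>s) = {a. (a, \<beta> ^ Suc n) \<in> set (part (Suc n))}"
    using Suc unfolding maximal_left_endpoints_part_Suc
    by (simp only: set_append set_shifted_copies set_\<xi>s set_upt atLeastLessThan_iff mem_Collect_eq)
  ultimately show ?case by simp
qed

lemma LS_psi_eq_offset: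
  "i \<le> L \<Longrightarrow> LS_psi L S (Suc n) i 0 = (\<lambda>\<xi>. \<xi> + offset n i)"
  "LS_psi L S (Suc n) L j = (\<lambda>\<xi>. \<xi> + offset n (L + j))"
  by (simp_all add: LS_psi_def offset_def \<beta>_def fun_eq_iff)

lemma LS_Lambda_eq_Lambda: "LS_Lambda L S (Suc n) = Lambda (Suc n)"
proof (induction n)
  case 0
  have "part 1 = pieces 0 0"
    using part_Suc[of 0] by (simp add: refine_cell_def)
  then have "LS_Lambda L S 1 = sort (map (offset 0) [0..<L + S])"
    by (simp add: pieces_def comp_def)
  also have "\<dots> = map (offset 0) [0..<L + S]"
    by (simp add: sorted_iff_nth_mono sorted_sort_id)
  also have "\<dots> = Lambda 1"
    using L_pos upt_conv_Cons[of 0 "L + S"] by (simp add: LS_l_eq shifted_copies_def comp_def)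
  finally show ?case by simp
next
  case (Suc n)
  define \<xi>s where "\<xi>s = take (LS_l L S (Suc n)) (Lambda (Suc n))"
  have "concat (map (\<lambda>i. map (LS_psi L S (Suc (Suc n)) i 0) \<xi>s) [1..<L])
      = shifted_copies (Suc n) [1..<L] \<xi>s"
    unfolding shifted_copies_def by (intro arg_cong[where f = concat] map_cong) (auto simp: LS_psi_eq_offset)
  moreover have "concat (map (\<lambda>j. map (LS_psi L S (Suc (Suc n)) L j) \<xi>s) [0..<S])
      = shifted_copies (Suc n) [L..<L + S] \<xi>s"
  proof -
    have "[L..<L + S] = map (\<lambda>j. L + j) [0..<S]"
      using map_add_upt[of L S] by (simp add: add.commute)
    then show ?thesis by (simp add: shifted_copies_def LS_psi_eq_offset comp_def)
  qed
  ultimately show ?case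
    unfolding LS_Lambda.simps(2)[of L S "Suc n"] Lambda.simps(2)[of "Suc n"] Let_def Suc.IH
      \<xi>s_def[symmetric] upt_1_split shifted_copies_append
    by simp
qed

lemma length_Lambda: "length (Lambda n) = LS_t L S n"
  using Lambda_invariant by blast

definition max_points :: "nat \<Rightarrow> real list" where
  "max_points n = take (LS_l L S n) (Lambda n)"

lemma length_max_points: "length (max_points n) = LS_l L S n"
  using Lambda_invariant[of n] by (simp add: max_points_def)

lemma set_max_points: "set (max_points n) = {a. (a, \<beta> ^ n) \<in> set (part n)}"
  using Lambda_invariant[of n] by (simp add: max_points_def)

text \<open>The first \<open>LS_t L S n + r\<close> points are \<open>\<Lambda>\<^sup>n\<close> followed by the first \<open>r\<close> new points. These come
  in blocks \<open>k = 1, \<dots>, L + S - 1\<close> of \<open>l\<^sub>n\<close> points each, the \<open>k\<close>-th block shifting the maximal left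
  endpoints by \<open>offset n k\<close>; \<open>generated n r j k\<close> says that the \<open>k\<close>-th shift of the \<open>j\<close>-th
  maximal left endpoint is already present.\<close>

definition prefix_points :: "nat \<Rightarrow> nat \<Rightarrow> real set" where
  "prefix_points n r = set (take (LS_t L S n + r) (Lambda (Suc n)))"

definition generated :: "nat \<Rightarrow> nat \<Rightarrow> nat \<Rightarrow> nat \<Rightarrow> bool" where
  "generated n r j k \<longleftrightarrow> j < LS_l L S n \<and> 1 \<le> k \<and> k < L + S \<and> (k - 1) * LS_l L S n + j < r"

lemma mem_prefix_points_iff:
  "y \<in> prefix_points n r \<longleftrightarrow>
     y \<in> fst ` set (part n) \<or> (\<exists>j k. generated n r j k \<and> y = max_points n ! j + offset n k)"
proof -
  have "prefix_points n r = set (Lambda n) \<union> set (take r (shifted_copies n [1..<L + S] (max_points n)))"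
    unfolding prefix_points_def using length_Lambda[of n] by (simp add: max_points_def)
  also have "set (take r (shifted_copies n [1..<L + S] (max_points n)))
      = {max_points n ! j + offset n k | j k. generated n r j k}"
    (is "?A = ?B")
  proof
    show "?A \<subseteq> ?B"
    proof
      fix y assume "y \<in> ?A"
      then obtain i j where "i < L + S - 1" "j < LS_l L S n" "i * LS_l L S n + j < r"
          "y = max_points n ! j + offset n (Suc i)"
        unfolding set_take_shifted_copies length_max_points by auto
      then show "y \<in> ?B" unfolding generated_def by (intro CollectI exI[of _ j] exI[of _ "Suc i"]) simp
    qed
    show "?B \<subseteq> ?A"
    proof
      fix y assume "y \<in> ?B"
      then obtain j k where "generated n r j k" "y = max_points n ! j + offset n k"
        by blast
      then show "y \<in> ?A"
        unfolding set_take_shifted_copies length_max_points generated_def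
        by (intro CollectI exI[of _ "k - 1"] exI[of _ j]) auto
    qed
  qed
  finally show ?thesis using Lambda_invariant[of n] by auto
qed

lemma generated_in_prefix_points: "generated n r j k \<Longrightarrow> max_points n ! j + offset n k \<in> prefix_points n r"
  unfolding mem_prefix_points_iff by blast

lemma left_endpoint_in_prefix_points: "c \<in> set (part n) \<Longrightarrow> fst c \<in> prefix_points n r"
  unfolding mem_prefix_points_iff by force

lemma max_points_nth_mem: "j < LS_l L S n \<Longrightarrow> (max_points n ! j, \<beta> ^ n) \<in> set (part n)"
  using set_max_points[of n] length_max_points[of n] nth_mem[of j "max_points n"] by auto

lemma max_points_index:
  assumes "(a, \<beta> ^ n) \<in> set (part n)"
  obtains j where "j < LS_l L S n" "max_points n ! j = a"
proof -
  have "a \<in> set (max_points n)" using assms set_max_points by simp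
  then obtain j where "j < length (max_points n)" "max_points n ! j = a"
    by (auto simp: in_set_conv_nth)
  then show thesis using that length_max_points by simp
qed

lemma prefix_point_cases:
  assumes "y \<in> prefix_points n r"
  obtains a d k where "(a, d) \<in> set (part n)" "k < L + S" "y = a + offset n k"
    "k = 0 \<or> (d = \<beta> ^ n \<and> (\<exists>j. generated n r j k \<and> max_points n ! j = a))"
  using assms unfolding mem_prefix_points_iff
proof (elim disjE exE conjE)
  assume "y \<in> fst ` set (part n)"
  then obtain d where "(y, d) \<in> set (part n)" by force
  then show thesis using that[of y d 0] L_pos by simp
next
  fix j k assume "generated n r j k" "y = max_points n ! j + offset n k"
  moreover have "(max_points n ! j, \<beta> ^ n) \<in> set (part n)"
    using \<open>generated n r j k\<close> by (intro max_points_nth_mem) (simp add: generated_def)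
  ultimately show thesis using that[of "max_points n ! j" "\<beta> ^ n" k] by (auto simp: generated_def)
qed

lemma offset_in_cell:
  assumes "(a, d) \<in> set (part n)" and "k < L + S" and "k = 0 \<or> d = \<beta> ^ n"
  shows "a \<le> a + offset n k" "a + offset n k < a + d"
proof -
  have "0 < d" using tiling_bounds[OF tiling_part assms(1)] by simp
  then show "a \<le> a + offset n k" "a + offset n k < a + d"
    using assms offset_less_full[of k n] offset_nonneg[of n k] by auto
qed

lemma prefix_points_less_1: "y \<in> prefix_points n r \<Longrightarrow> y < 1"
proof (elim prefix_point_cases)
  fix a d k assume cell: "(a, d) \<in> set (part n)" "k < L + S" "y = a + offset n k"
    "k = 0 \<or> d = \<beta> ^ n \<and> (\<exists>j. generated n r j k \<and> max_points n ! j = a)"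
  then have "y < a + d" using offset_in_cell[OF cell(1,2)] by blast
  also have "a + d \<le> 1" using tiling_bounds[OF tiling_part cell(1)] by simp
  finally show "y < 1" .
qed

text \<open>Besides the two piece lengths, a gap can end at the boundary of the block that is being
  filled, whose index is \<open>r div l\<^sub>n\<close>.\<close>

definition gap_values :: "nat \<Rightarrow> nat \<Rightarrow> real set" where
  "gap_values n D = {\<beta> ^ Suc n, \<beta> ^ Suc (Suc n), \<beta> ^ n - offset n D, \<beta> ^ n - offset n (Suc D)}"

lemma piece_len_in_gap_values: "piece_len n k \<in> gap_values n D"
  by (simp add: gap_values_def piece_len_def)

lemma neighbour_in_same_cell:
  assumes "(p, q) \<in> neighbours (prefix_points n r)"
    and "p = a + offset n k" and "q = a + offset n k'" and "generated n r j k'" and "max_points n ! j = a"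
  shows "k' = Suc k"
proof (rule ccontr)
  assume "k' \<noteq> Suc k"
  moreover have "k < k'" using assms(1-3) by (simp add: neighbours_def)
  ultimately have "Suc k < k'" by simp
  have "k * LS_l L S n \<le> (k' - 1) * LS_l L S n"
    using \<open>Suc k < k'\<close> by (intro mult_right_mono) auto
  then have "k * LS_l L S n + j < r"
    using assms(4) unfolding generated_def by linarith
  then have "generated n r j (Suc k)"
    using assms(4) \<open>Suc k < k'\<close> unfolding generated_def by simp
  then have "a + offset n (Suc k) \<in> prefix_points n r"
    using generated_in_prefix_points assms(5) by blast
  moreover have "p < a + offset n (Suc k)" "a + offset n (Suc k) < q"
    using assms(2,3) \<open>Suc k < k'\<close> by simp_all
  ultimately show False using assms(1) by (auto simp: neighbours_def)
qed

lemma neighbour_reaches_cell_end: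
  assumes nb: "(p, q) \<in> neighbours (prefix_points n r)"
    and cell: "(a, d) \<in> set (part n)" and "p < a + d" "a + d \<le> q"
  shows "q = a + d"
proof (rule ccontr)
  assume "q \<noteq> a + d"
  with assms(4) have "a + d < q" by simp
  moreover have "q < 1" using nb prefix_points_less_1 by (auto simp: neighbours_def)
  ultimately obtain c' where "c' \<in> set (part n)" "fst c' = a + d"
    using tiling_next[OF tiling_part cell] by auto
  then have "a + d \<in> prefix_points n r"
    using left_endpoint_in_prefix_points[of c' n r] by simp
  then show False using nb \<open>p < a + d\<close> \<open>a + d < q\<close> by (auto simp: neighbours_def)
qed

lemma neighbour_at_cell_end:
  assumes nb: "(p, q) \<in> neighbours (prefix_points n r)"
    and cell: "(a, d) \<in> set (part n)" "k < L + S" "p = a + offset n k"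
    and rep: "k = 0 \<or> (d = \<beta> ^ n \<and> (\<exists>j. generated n r j k \<and> max_points n ! j = a))"
    and beyond: "a + d \<le> q"
  shows "q - p \<in> gap_values n (r div LS_l L S n)"
proof -
  have between: "\<And>z. z \<in> prefix_points n r \<Longrightarrow> p < z \<Longrightarrow> q \<le> z"
    using nb by (auto simp: neighbours_def not_less)
  have "p < a + d" using offset_in_cell[OF cell(1,2)] rep cell(3) by blast
  then have q_eq: "q = a + d" using neighbour_reaches_cell_end[OF nb cell(1) _ beyond] by blast
  show ?thesis
  proof (cases "d = \<beta> ^ n")
    case False
    then have "k = 0" "d = \<beta> ^ Suc n" using rep part_lengths[OF cell(1)] by auto
    then show ?thesis using q_eq cell(3) by (simp add: gap_values_def del: power_Suc)
  next
    case True
    show ?thesis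
    proof (cases "Suc k = L + S")
      case True
      then have "q - p = piece_len n k"
        using q_eq cell(3) \<open>d = \<beta> ^ n\<close> offset_full[of n] offset_Suc[of n k] by simp
      then show ?thesis using piece_len_in_gap_values by simp
    next
      case False
      obtain j' where j': "j' < LS_l L S n" "max_points n ! j' = a"
        using max_points_index cell(1) \<open>d = \<beta> ^ n\<close> by blast
      have "\<not> generated n r j' (Suc k)"
      proof
        assume "generated n r j' (Suc k)"
        then have "a + offset n (Suc k) \<in> prefix_points n r"
          using generated_in_prefix_points j'(2) by blast
        moreover have "a + offset n (Suc k) < q"
          using q_eq \<open>d = \<beta> ^ n\<close> offset_less_full[of "Suc k" n] False cell(2) by simp
        ultimately show False using between cell(3) by fastforce
      qed
      then have "r \<le> k * LS_l L S n + j'"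
        using j'(1) False cell(2) unfolding generated_def by auto
      moreover have "k = 0 \<or> (\<exists>j. (k - 1) * LS_l L S n + j < r)"
        using rep unfolding generated_def by blast
      ultimately have "k = r div LS_l L S n \<or> k = Suc (r div LS_l L S n)"
        using index_block_cases[OF j'(1)] by blast
      then show ?thesis
        using q_eq cell(3) \<open>d = \<beta> ^ n\<close> by (auto simp: gap_values_def simp del: power_Suc)
    qed
  qed
qed

lemma prefix_points_gap:
  assumes "(p, q) \<in> neighbours (prefix_points n r)"
  shows "q - p \<in> gap_values n (r div LS_l L S n)"
proof -
  have "p \<in> prefix_points n r" "q \<in> prefix_points n r" "p < q"
    using assms by (auto simp: neighbours_def)
  obtain a d k where p: "(a, d) \<in> set (part n)" "k < L + S" "p = a + offset n k"
    "k = 0 \<or> (d = \<beta> ^ n \<and> (\<exists>j. generated n r j k \<and> max_points n ! j = a))"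
    using prefix_point_cases[OF \<open>p \<in> prefix_points n r\<close>] by blast
  obtain a' d' k' where q: "(a', d') \<in> set (part n)" "k' < L + S" "q = a' + offset n k'"
    "k' = 0 \<or> (d' = \<beta> ^ n \<and> (\<exists>j. generated n r j k' \<and> max_points n ! j = a'))"
    using prefix_point_cases[OF \<open>q \<in> prefix_points n r\<close>] by blast
  show ?thesis
  proof (cases "q < a + d")
    case True
    have "a \<le> p" using offset_in_cell[OF p(1,2)] p(3,4) by blast
    moreover have "a' \<le> q" "q < a' + d'" using offset_in_cell[OF q(1,2)] q(3,4) by blast+
    ultimately have same: "(a', d') = (a, d)"
      using tiling_disjoint[OF tiling_part q(1) p(1), of q] True \<open>p < q\<close> by simp
    have "k' \<noteq> 0" using \<open>p < q\<close> p(3) q(3) same by auto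
    then obtain j where "generated n r j k'" "max_points n ! j = a"
      using q(4) same by auto
    then have "k' = Suc k"
      using neighbour_in_same_cell[OF assms p(3)] q(3) same by simp
    then have "q - p = piece_len n k" using p(3) q(3) same offset_Suc[of n k] by simp
    then show ?thesis using piece_len_in_gap_values by simp
  next
    case False
    then show ?thesis using neighbour_at_cell_end[OF assms p] by simp
  qed
qed

lemma card_gap_values: "card (gap_values n D) \<le> 4"
  unfolding gap_values_def by (intro card_insert_le_m1) (auto intro: card_insert_le_m1)

end

theorem LS_sequence_gaps:
  assumes "is_LS_sequence y"
  obtains G where "finite G" "card G \<le> 4" "\<forall>(p, q) \<in> neighbours (y ` {1..N}). q - p \<in> G"
proof (cases "N \<le> 1")
  case True
  then have "{1..N} \<subseteq> {1}" by auto
  then have "y ` {1..N} \<subseteq> {y 1}" by auto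
  then have "neighbours (y ` {1..N}) = {}" by (rule neighbours_subsingleton)
  then show thesis using that[of "{}"] by simp
next
  case False
  obtain L S where LS: "1 \<le> L" "2 \<le> L + S"
    and y: "\<And>n k. 1 \<le> n \<Longrightarrow> k < LS_t L S n \<Longrightarrow> y (k + 1) = LS_Lambda L S n ! k"
    using assms unfolding is_LS_sequence_def by blast
  interpret LS_construction L S using LS by unfold_locales
  have "\<exists>m. N \<le> LS_t L S m" using LS_t_ge[of N] less_imp_le by blast
  define m where "m = (LEAST m. N \<le> LS_t L S m)"
  have N_le: "N \<le> LS_t L S m" unfolding m_def by (rule LeastI_ex) fact
  moreover have "LS_t L S 0 = 1" by (simp add: LS_t_def)
  ultimately have "m \<noteq> 0" using False by (metis le_antisym nle_le)
  then obtain n where m: "m = Suc n" using not0_implies_Suc by blast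
  have less_N: "LS_t L S n < N" using not_less_Least[of n "\<lambda>m. N \<le> LS_t L S m"] m unfolding m_def by simp
  have "N \<le> length (Lambda (Suc n))"
    using N_le m by (simp only: length_Lambda)
  moreover have "y (Suc k) = Lambda (Suc n) ! k" if "k < N" for k
    using that N_le m y[of "Suc n" k] by (simp only: LS_Lambda_eq_Lambda) simp
  ultimately have "y ` {1..N} = set (take N (Lambda (Suc n)))"
    by (rule image_eq_set_take)
  also have "\<dots> = prefix_points n (N - LS_t L S n)"
    unfolding prefix_points_def using less_N by simp
  finally have "\<forall>(p, q) \<in> neighbours (y ` {1..N}). q - p \<in> gap_values n ((N - LS_t L S n) div LS_l L S n)"
    using prefix_points_gap by auto
  moreover have "finite (gap_values n D)" for D by (simp add: gap_values_def)
  ultimately show thesis using that card_gap_values by blast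
qed

section \<open>Pair correlations\<close>

lemma dist_int_uminus:
  assumes "0 < w" "w \<le> 1 / 2"
  shows "dist_int (- w) = w"
proof -
  have "\<lfloor>- w\<rfloor> = -1" "\<lceil>- w\<rceil> = 0" using assms by (simp_all add: floor_eq_iff ceiling_eq_iff)
  then show ?thesis using assms by (simp add: dist_int_def)
qed

definition close_pairs :: "(nat \<Rightarrow> real) \<Rightarrow> real \<Rightarrow> nat \<Rightarrow> (nat \<times> nat) set" where
  "close_pairs x s N =
     {(l, m). l \<in> {1..N} \<and> m \<in> {1..N} \<and> l \<noteq> m \<and> dist_int (x l - x m) \<le> s / real N}"

lemma finite_close_pairs: "finite (close_pairs x s N)"
  by (rule finite_subset[of _ "{1..N} \<times> {1..N}"]) (auto simp: close_pairs_def)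

lemma pair_corr_diff_ge_card:
  assumes "s0 \<le> s1" and "P \<subseteq> close_pairs x s1 N - close_pairs x s0 N"
  shows "real (card P) / real N \<le> pair_corr x s1 N - pair_corr x s0 N"
proof -
  have "s0 / real N \<le> s1 / real N" using assms(1) by (simp add: divide_right_mono)
  then have mono: "close_pairs x s0 N \<subseteq> close_pairs x s1 N" by (auto simp: close_pairs_def)
  have "card P \<le> card (close_pairs x s1 N - close_pairs x s0 N)"
    using assms(2) finite_close_pairs by (intro card_mono) auto
  also have "\<dots> = card (close_pairs x s1 N) - card (close_pairs x s0 N)"
    using finite_close_pairs mono by (rule card_Diff_subset)
  finally have "real (card P) \<le> real (card (close_pairs x s1 N)) - real (card (close_pairs x s0 N))"
    using card_mono[OF finite_close_pairs mono] by linarith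
  moreover have "pair_corr x s N = real (card (close_pairs x s N)) / real N" for s
    by (simp add: pair_corr_def close_pairs_def)
  ultimately show ?thesis by (simp add: diff_divide_distrib[symmetric] divide_right_mono)
qed

lemma pair_corr_increment_ge:
  fixes Q :: "(real \<times> real) set"
  assumes "0 < N" "0 \<le> s0" "s0 \<le> s1"
    and Q: "\<And>p q. (p, q) \<in> Q \<Longrightarrow> p \<in> x ` {1..N} \<and> q \<in> x ` {1..N}
      \<and> s0 < real N * (q - p) \<and> real N * (q - p) \<le> s1 \<and> q - p \<le> 1 / 2"
  shows "real (card Q) / real N \<le> pair_corr x s1 N - pair_corr x s0 N"
proof -
  define idx where "idx = inv_into {1..N} x"
  have idx: "idx v \<in> {1..N}" "x (idx v) = v" if "v \<in> x ` {1..N}" for v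
    using that unfolding idx_def by (rule inv_into_into, rule f_inv_into_f)
  have "(\<lambda>(p, q). (idx p, idx q)) ` Q \<subseteq> close_pairs x s1 N - close_pairs x s0 N"
  proof clarify
    fix p q assume "(p, q) \<in> Q"
    note pq = Q[OF this]
    have "0 < real N * (q - p)" using pq assms(2) by linarith
    then have "0 < q - p" using assms(1) by (simp add: zero_less_mult_iff)
    then have "dist_int (x (idx p) - x (idx q)) = q - p"
      using pq idx dist_int_uminus[of "q - p"] by simp
    moreover have "s0 / real N < q - p" "q - p \<le> s1 / real N"
      using pq assms(1) by (simp_all add: field_simps)
    moreover have "idx p \<noteq> idx q"
      using idx pq \<open>0 < q - p\<close> by (metis less_irrefl diff_self)
    ultimately show "(idx p, idx q) \<in> close_pairs x s1 N - close_pairs x s0 N"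
      using pq idx by (auto simp: close_pairs_def)
  qed
  moreover have "inj_on (\<lambda>(p, q). (idx p, idx q)) Q"
  proof (rule inj_onI, clarify)
    fix p q p' q' assume "(p, q) \<in> Q" "(p', q') \<in> Q" "idx p = idx p'" "idx q = idx q'"
    then show "p = p' \<and> q = q'" using Q idx by metis
  qed
  ultimately show ?thesis
    using pair_corr_diff_ge_card[OF assms(3)] by (metis card_image)
qed

lemma poissonian_pair_corr_eventually_close:
  assumes "poissonian_pair_corr x" "finite A" "\<forall>s \<in> A. 0 \<le> s" "0 < e"
  shows "\<forall>\<^sub>F N in sequentially. \<forall>s \<in> A. \<bar>pair_corr x s N - 2 * s\<bar> < e"
proof (rule eventually_ball_finite[OF assms(2)], rule ballI)
  fix s assume "s \<in> A"
  then have "(\<lambda>N. pair_corr x s N) \<longlonglongrightarrow> 2 * s"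
    using assms(1,3) unfolding poissonian_pair_corr_def by blast
  from tendstoD[OF this assms(4)] show "\<forall>\<^sub>F N in sequentially. \<bar>pair_corr x s N - 2 * s\<bar> < e"
    by (simp add: dist_real_def)
qed

section \<open>A large overlap with a set of few gap lengths\<close>

text \<open>Within a scaled gap below \<open>4 / \<kappa>\<close> a gap value \<open>\<ge> \<sigma>\<close> occurs at most
  \<open>multiplicity_bound \<kappa> \<sigma>\<close> times, so sums of gaps of size at least \<open>\<sigma>\<close> drawn from four values
  take at most \<open>K = (multiplicity_bound \<kappa> \<sigma> + 1) ^ 4\<close> values. The window \<open>resolution \<kappa> \<sigma> = \<kappa> / (16 K)\<close>
  makes the pigeonhole principle produce \<open>4 \<eta> N\<close> pairs, and the next scale \<open>\<kappa> \<eta> / 4\<close> keeps the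
  number of pairs whose tiny gaps add up to \<open>\<eta>\<close> below \<open>\<kappa> N / 4\<close>.\<close>

definition multiplicity_bound :: "real \<Rightarrow> real \<Rightarrow> nat" where
  "multiplicity_bound \<kappa> \<sigma> = nat \<lfloor>4 / \<kappa> / \<sigma>\<rfloor>"

definition resolution :: "real \<Rightarrow> real \<Rightarrow> real" where
  "resolution \<kappa> \<sigma> = \<kappa> / (16 * real ((multiplicity_bound \<kappa> \<sigma> + 1) ^ 4))"

definition scale :: "real \<Rightarrow> nat \<Rightarrow> real" where
  "scale \<kappa> j = ((\<lambda>\<sigma>. \<kappa> * resolution \<kappa> \<sigma> / 4) ^^ j) 1"

lemma scale_Suc: "scale \<kappa> (Suc j) = \<kappa> * resolution \<kappa> (scale \<kappa> j) / 4"
  by (simp add: scale_def)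

lemma resolution_pos: "0 < \<kappa> \<Longrightarrow> 0 < resolution \<kappa> \<sigma>"
  by (simp add: resolution_def)

lemma scale_pos: "0 < \<kappa> \<Longrightarrow> 0 < scale \<kappa> j"
  by (cases j) (simp_all add: scale_def resolution_pos)

lemma scale_Suc_less:
  assumes "0 < \<kappa>" "\<kappa> \<le> 1"
  shows "scale \<kappa> (Suc j) < scale \<kappa> j"
proof -
  define \<sigma> where "\<sigma> = scale \<kappa> j"
  define K where "K = real ((multiplicity_bound \<kappa> \<sigma> + 1) ^ 4)"
  have \<sigma>: "0 < \<sigma>" unfolding \<sigma>_def using scale_pos[OF assms(1)] .
  have "4 / \<kappa> / \<sigma> < real (multiplicity_bound \<kappa> \<sigma>) + 1"
    unfolding multiplicity_bound_def using \<sigma> assms(1) by linarith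
  also have "\<dots> \<le> (real (multiplicity_bound \<kappa> \<sigma>) + 1) ^ 4" by (rule self_le_power) auto
  also have "\<dots> = K" unfolding K_def by (simp add: add.commute)
  finally have "4 < K * \<sigma> * \<kappa>" using \<sigma> assms(1) by (simp add: field_simps)
  also have "\<dots> \<le> K * \<sigma>"
    using assms \<sigma> by (intro mult_right_le_one_le) (auto simp: K_def)
  finally have "\<kappa> * \<kappa> < 64 * K * \<sigma>"
    using assms mult_le_one[of \<kappa> \<kappa>] by linarith
  then have "\<kappa> * (\<kappa> / (16 * K)) / 4 < \<sigma>"
    using \<sigma> K_def by (simp add: field_simps)
  then show ?thesis by (simp add: scale_Suc \<sigma>_def[symmetric] resolution_def K_def)
qed

lemma decseq_scale: "0 < \<kappa> \<Longrightarrow> \<kappa> \<le> 1 \<Longrightarrow> decseq (scale \<kappa>)"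
  using scale_Suc_less by (intro decseq_SucI less_imp_le) auto

locale overlap_with_few_gaps =
  fixes \<kappa> :: real and N :: nat and Y C G :: "real set"
  assumes \<kappa>_pos: "0 < \<kappa>" and \<kappa>_le_1: "\<kappa> \<le> 1" and N_large: "8 / \<kappa> \<le> real N"
    and finite_Y: "finite Y" and card_Y: "card Y \<le> N"
    and C_subset: "C \<subseteq> Y" and C_unit: "C \<subseteq> {0..<1}" and card_C: "\<kappa> * real N \<le> real (card C)"
    and finite_G: "finite G" and card_G: "card G \<le> 4" and gaps: "\<forall>(a, b) \<in> neighbours Y. b - a \<in> G"
begin

definition scaled_gap :: "real \<times> real \<Rightarrow> real" where
  "scaled_gap e = real N * (snd e - fst e)"

definition segment :: "real \<times> real \<Rightarrow> (real \<times> real) set" where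
  "segment e = neighbours (Y \<inter> {fst e..snd e})"

definition free_level :: "nat \<Rightarrow> bool" where
  "free_level j \<longleftrightarrow> (\<forall>g \<in> neighbours Y. scaled_gap g < scale \<kappa> (Suc j) \<or> scale \<kappa> j \<le> scaled_gap g)"

definition tiny_part :: "nat \<Rightarrow> real \<times> real \<Rightarrow> real" where
  "tiny_part j e = (\<Sum>g \<in> {g \<in> segment e. scaled_gap g < scale \<kappa> (Suc j)}. scaled_gap g)"

definition large_part :: "nat \<Rightarrow> real \<times> real \<Rightarrow> real" where
  "large_part j e = (\<Sum>g \<in> {g \<in> segment e. scale \<kappa> j \<le> scaled_gap g}. scaled_gap g)"

lemma finite_C: "finite C"
  using finite_Y C_subset finite_subset by blast

lemma \<kappa>N_ge_8: "8 \<le> \<kappa> * real N"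
  using N_large \<kappa>_pos by (simp add: field_simps)

lemma N_pos: "0 < real N"
  using N_large \<kappa>_pos divide_pos_pos[of 8 \<kappa>] by linarith

lemma finite_segment: "finite (segment e)"
  unfolding segment_def using finite_Y by (simp add: finite_neighbours)

lemma segment_subset: "segment e \<subseteq> neighbours Y"
  unfolding segment_def by (rule neighbours_segment_subset)

lemma scaled_gap_pos: "g \<in> neighbours A \<Longrightarrow> 0 < scaled_gap g"
  using N_pos by (auto simp: scaled_gap_def neighbours_def)

lemma sum_scaled_gap_segment:
  assumes "e \<in> neighbours C"
  shows "(\<Sum>g \<in> segment e. scaled_gap g) = scaled_gap e"
proof -
  have "fst e \<in> Y" "snd e \<in> Y" "fst e < snd e"
    using assms C_subset by (auto simp: neighbours_def)
  then have "(\<Sum>(a, b) \<in> segment e. b - a) = snd e - fst e"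
    unfolding segment_def using finite_Y by (intro neighbours_segment_telescope)
  then show ?thesis by (simp add: scaled_gap_def case_prod_beta sum_distrib_left[symmetric])
qed

lemma exists_free_level: "\<exists>j \<le> 4. free_level j"
proof -
  have "\<exists>j \<le> 4. \<forall>v \<in> (\<lambda>t. real N * t) ` G. v < scale \<kappa> (Suc j) \<or> scale \<kappa> j \<le> v"
    using decseq_scale[OF \<kappa>_pos \<kappa>_le_1] finite_G card_G card_image_le[OF finite_G]
    by (intro exists_level_avoiding) (auto intro: le_trans)
  then show ?thesis
    using gaps unfolding free_level_def scaled_gap_def by fastforce
qed

lemma scaled_gap_split:
  assumes "free_level j" and "e \<in> neighbours C"
  shows "scaled_gap e = tiny_part j e + large_part j e"
proof -
  have "{g \<in> segment e. scale \<kappa> j \<le> scaled_gap g} = segment e - {g \<in> segment e. scaled_gap g < scale \<kappa> (Suc j)}"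
    using assms(1) segment_subset scale_Suc_less[OF \<kappa>_pos \<kappa>_le_1, of j]
    unfolding free_level_def by fastforce
  then show ?thesis
    unfolding tiny_part_def large_part_def sum_scaled_gap_segment[OF assms(2), symmetric]
    using sum.subset_diff[of "{g \<in> segment e. scaled_gap g < scale \<kappa> (Suc j)}" "segment e" scaled_gap]
      finite_segment by simp
qed

lemma tiny_part_nonneg: "0 \<le> tiny_part j e"
  unfolding tiny_part_def segment_def by (intro sum_nonneg) (auto dest: scaled_gap_pos intro: less_imp_le)

lemma large_part_nonneg: "0 \<le> large_part j e"
  unfolding large_part_def segment_def by (intro sum_nonneg) (auto dest: scaled_gap_pos intro: less_imp_le)

lemma card_long_neighbours: "real (card {e \<in> neighbours C. 4 / \<kappa> \<le> scaled_gap e}) \<le> \<kappa> * real N / 4"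
proof -
  have "C \<noteq> {}" using card_C \<kappa>N_ge_8 by auto
  then have "(\<Sum>e \<in> neighbours C. scaled_gap e) = real N * (Max C - Min C)"
    using neighbours_telescope[OF finite_C]
    by (simp add: scaled_gap_def case_prod_beta sum_distrib_left[symmetric])
  also have "\<dots> \<le> real N"
  proof -
    have "Max C < 1" "0 \<le> Min C"
      using C_unit Max_in[OF finite_C \<open>C \<noteq> {}\<close>] Min_in[OF finite_C \<open>C \<noteq> {}\<close>] by auto
    then show ?thesis using N_pos by (simp add: mult_left_le)
  qed
  moreover have "4 / \<kappa> * real (card {e \<in> neighbours C. 4 / \<kappa> \<le> scaled_gap e})
      \<le> (\<Sum>e \<in> neighbours C. scaled_gap e)"
    using finite_neighbours[OF finite_C] scaled_gap_pos
    by (intro card_threshold_le_sum) (auto intro: less_imp_le)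
  ultimately have "4 / \<kappa> * real (card {e \<in> neighbours C. 4 / \<kappa> \<le> scaled_gap e}) \<le> real N"
    by linarith
  then show ?thesis using \<kappa>_pos by (simp add: field_simps)
qed

lemma card_tiny_heavy_neighbours:
  "real (card {e \<in> neighbours C. resolution \<kappa> (scale \<kappa> j) \<le> tiny_part j e}) \<le> \<kappa> * real N / 4"
proof -
  define \<eta> where "\<eta> = resolution \<kappa> (scale \<kappa> j)"
  have \<eta>: "0 < \<eta>" unfolding \<eta>_def using resolution_pos[OF \<kappa>_pos] .
  have "tiny_part j e \<le> scale \<kappa> (Suc j) * real (card (segment e))" for e
  proof -
    have "tiny_part j e \<le> (\<Sum>g \<in> {g \<in> segment e. scaled_gap g < scale \<kappa> (Suc j)}. scale \<kappa> (Suc j))"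
      unfolding tiny_part_def by (intro sum_mono) simp
    also have "\<dots> \<le> scale \<kappa> (Suc j) * real (card (segment e))"
      using scale_pos[OF \<kappa>_pos] finite_segment by (simp add: card_mono)
    finally show ?thesis .
  qed
  then have "(\<Sum>e \<in> neighbours C. tiny_part j e)
      \<le> scale \<kappa> (Suc j) * (\<Sum>e \<in> neighbours C. real (card (segment e)))"
    by (simp add: sum_distrib_left sum_mono)
  also have "\<dots> \<le> scale \<kappa> (Suc j) * real N"
  proof -
    have "(\<Sum>e \<in> neighbours C. card (segment e)) \<le> N"
      using sum_card_neighbours_segments_le[OF finite_Y C_subset] card_Y unfolding segment_def
      by linarith
    then have "(\<Sum>e \<in> neighbours C. real (card (segment e))) \<le> real N"
      by (simp only: of_nat_sum[symmetric] of_nat_le_iff)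
    then show ?thesis
      using scale_pos[OF \<kappa>_pos, of "Suc j"] by (intro mult_left_mono) simp_all
  qed
  finally have "\<eta> * real (card {e \<in> neighbours C. \<eta> \<le> tiny_part j e}) \<le> \<kappa> * \<eta> / 4 * real N"
    using card_threshold_le_sum[of "neighbours C" "tiny_part j" \<eta>] finite_C tiny_part_nonneg
    by (simp add: finite_neighbours scale_Suc \<eta>_def)
  then show ?thesis using \<eta> by (simp add: \<eta>_def field_simps)
qed

definition good_pairs :: "nat \<Rightarrow> (real \<times> real) set" where
  "good_pairs j = {e \<in> neighbours C. scaled_gap e < 4 / \<kappa> \<and> tiny_part j e < resolution \<kappa> (scale \<kappa> j)}"

lemma card_good_pairs: "\<kappa> * real N / 4 \<le> real (card (good_pairs j))"
proof -
  have "C \<noteq> {}" using card_C \<kappa>N_ge_8 by auto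
  have "neighbours C \<subseteq> good_pairs j \<union> {e \<in> neighbours C. 4 / \<kappa> \<le> scaled_gap e}
      \<union> {e \<in> neighbours C. resolution \<kappa> (scale \<kappa> j) \<le> tiny_part j e}"
    by (auto simp: good_pairs_def)
  then have "card (neighbours C) \<le> card (good_pairs j \<union> {e \<in> neighbours C. 4 / \<kappa> \<le> scaled_gap e}
      \<union> {e \<in> neighbours C. resolution \<kappa> (scale \<kappa> j) \<le> tiny_part j e})"
    using finite_C by (intro card_mono) (auto simp: good_pairs_def finite_neighbours)
  also have "\<dots> \<le> card (good_pairs j) + card {e \<in> neighbours C. 4 / \<kappa> \<le> scaled_gap e}
      + card {e \<in> neighbours C. resolution \<kappa> (scale \<kappa> j) \<le> tiny_part j e}"
    by (intro order_trans[OF card_Un_le] add_right_mono card_Un_le)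
  moreover have "card (neighbours C) = card C - 1"
    using neighbours_telescope[OF finite_C \<open>C \<noteq> {}\<close>] by simp
  ultimately show ?thesis
    using card_long_neighbours card_tiny_heavy_neighbours[of j] card_C \<kappa>N_ge_8 by linarith
qed

definition large_values :: "nat \<Rightarrow> real set" where
  "large_values j = bounded_combinations {v \<in> (\<lambda>t. real N * t) ` G. scale \<kappa> j \<le> v}
     (multiplicity_bound \<kappa> (scale \<kappa> j))"

lemma finite_large_values: "finite (large_values j)"
  unfolding large_values_def using finite_G by (intro finite_bounded_combinations) simp

lemma card_large_values: "card (large_values j) \<le> (multiplicity_bound \<kappa> (scale \<kappa> j) + 1) ^ 4"
proof -
  define W where "W = {v \<in> (\<lambda>t. real N * t) ` G. scale \<kappa> j \<le> v}"
  have "card W \<le> card ((\<lambda>t. real N * t) ` G)"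
    unfolding W_def using finite_G by (intro card_mono) auto
  also have "\<dots> \<le> 4" using card_image_le[OF finite_G] card_G by (rule le_trans)
  finally have "card W \<le> 4" .
  moreover have "finite W" unfolding W_def using finite_G by simp
  ultimately show ?thesis
    unfolding large_values_def W_def[symmetric]
    using le_trans[OF card_bounded_combinations power_increasing] by simp
qed

lemma large_part_in_large_values:
  assumes "e \<in> good_pairs j"
  shows "large_part j e \<in> large_values j"
proof -
  define F where "F = {g \<in> segment e. scale \<kappa> j \<le> scaled_gap g}"
  have "large_part j e \<le> (\<Sum>g \<in> segment e. scaled_gap g)"
    unfolding large_part_def
  proof (rule sum_mono2[OF finite_segment])
    fix g assume "g \<in> segment e - {g \<in> segment e. scale \<kappa> j \<le> scaled_gap g}"
    then show "0 \<le> scaled_gap g" using scaled_gap_pos unfolding segment_def by (blast intro: less_imp_le)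
  qed auto
  also have "\<dots> = scaled_gap e"
    using assms by (intro sum_scaled_gap_segment) (simp add: good_pairs_def)
  also have "\<dots> \<le> 4 / \<kappa>" using assms by (simp add: good_pairs_def)
  finally have "sum scaled_gap F \<le> 4 / \<kappa>" unfolding F_def large_part_def .
  moreover have "scaled_gap ` F \<subseteq> {v \<in> (\<lambda>t. real N * t) ` G. scale \<kappa> j \<le> v}"
  proof
    fix v assume "v \<in> scaled_gap ` F"
    then obtain g where "g \<in> neighbours Y" "scale \<kappa> j \<le> scaled_gap g" "v = scaled_gap g"
      unfolding F_def using segment_subset by blast
    then show "v \<in> {v \<in> (\<lambda>t. real N * t) ` G. scale \<kappa> j \<le> v}"
      using gaps by (auto simp: scaled_gap_def case_prod_beta)
  qed
  moreover have "finite F" unfolding F_def using finite_segment by simp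
  ultimately have "sum scaled_gap F \<in> bounded_combinations {v \<in> (\<lambda>t. real N * t) ` G. scale \<kappa> j \<le> v}
      (nat \<lfloor>4 / \<kappa> / scale \<kappa> j\<rfloor>)"
    using finite_G scale_pos[OF \<kappa>_pos] by (intro sum_in_bounded_combinations) (auto simp: F_def)
  then show ?thesis unfolding F_def large_part_def large_values_def multiplicity_bound_def .
qed

lemma clustered_neighbours:
  assumes "free_level j"
  obtains D where "0 \<le> D" "D < 4 / \<kappa>"
    "4 * resolution \<kappa> (scale \<kappa> j) * real N \<le> real (card {e \<in> neighbours C. D \<le> scaled_gap e
        \<and> scaled_gap e < D + resolution \<kappa> (scale \<kappa> j) \<and> scaled_gap e < 4 / \<kappa>})"
proof -
  define \<eta> where "\<eta> = resolution \<kappa> (scale \<kappa> j)"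
  define K where "K = (multiplicity_bound \<kappa> (scale \<kappa> j) + 1) ^ 4"
  have "finite (good_pairs j)" using finite_neighbours[OF finite_C] by (simp add: good_pairs_def)
  moreover have "large_part j ` good_pairs j \<subseteq> large_values j"
    using large_part_in_large_values by blast
  ultimately obtain D where D: "card (good_pairs j) \<le> K * card {e \<in> good_pairs j. large_part j e = D}"
    using pigeonhole_fibre[OF _ finite_large_values _ card_large_values] unfolding K_def by blast
  define Q where "Q = {e \<in> good_pairs j. large_part j e = D}"
  have in_Q: "D \<le> scaled_gap e \<and> scaled_gap e < D + \<eta> \<and> scaled_gap e < 4 / \<kappa>" if "e \<in> Q" for e
    using that scaled_gap_split[OF assms, of e] tiny_part_nonneg[of j e]
    by (auto simp: Q_def good_pairs_def \<eta>_def)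
  have K_pos: "0 < real K" by (simp add: K_def)
  have "real (card (good_pairs j)) \<le> real K * real (card Q)"
    using D unfolding Q_def by (simp only: of_nat_mult[symmetric] of_nat_le_iff)
  then have "\<kappa> * real N / 4 \<le> real K * real (card Q)"
    using card_good_pairs[of j] by linarith
  then have "4 * \<eta> * real N \<le> real (card Q)"
    using K_pos by (simp add: \<eta>_def resolution_def K_def field_simps)
  also have "\<dots> \<le> real (card {e \<in> neighbours C. D \<le> scaled_gap e \<and> scaled_gap e < D + \<eta>
      \<and> scaled_gap e < 4 / \<kappa>})"
    using in_Q finite_C by (intro of_nat_mono card_mono) (auto simp: Q_def good_pairs_def finite_neighbours)
  finally have card_ge: "4 * \<eta> * real N \<le> \<dots>" .
  have "0 < 4 * \<eta> * real N" using N_pos resolution_pos[OF \<kappa>_pos] by (simp add: \<eta>_def)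
  then have "Q \<noteq> {}" using \<open>4 * \<eta> * real N \<le> real (card Q)\<close> by auto
  then obtain e where "e \<in> Q" by blast
  then have "0 \<le> D" "D < 4 / \<kappa>"
    using in_Q[of e] large_part_nonneg[of j e] by (auto simp: Q_def)
  then show thesis using that card_ge by (simp add: \<eta>_def)
qed

end

lemma grid_point_below:
  fixes \<epsilon> D :: real
  assumes "0 < \<epsilon>" "0 \<le> D"
  obtains m :: nat where "real m * \<epsilon> \<le> D"
    "\<And>t. 0 < t \<Longrightarrow> D \<le> t \<Longrightarrow> t < D + 4 * \<epsilon> \<Longrightarrow> real m * \<epsilon> < t \<and> t \<le> (real m + 6) * \<epsilon>"
proof -
  define k where "k = \<lfloor>D / \<epsilon>\<rfloor>"
  have k: "real_of_int k * \<epsilon> \<le> D" "D < (real_of_int k + 1) * \<epsilon>" "0 \<le> k"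
    using assms floor_divide_lower[OF assms(1), of D] floor_divide_upper[OF assms(1), of D]
    by (simp_all add: k_def)
  define m where "m = nat (k - 1)"
  have "real m * \<epsilon> \<le> D"
    using k assms(1) by (cases "k = 0") (simp_all add: m_def of_nat_diff algebra_simps)
  moreover have "real m * \<epsilon> < t \<and> t \<le> (real m + 6) * \<epsilon>"
    if "0 < t" "D \<le> t" "t < D + 4 * \<epsilon>" for t
    using k that assms(1) by (cases "k = 0") (simp_all add: m_def algebra_simps)
  ultimately show thesis using that by blast
qed

definition mesh :: "real \<Rightarrow> nat \<Rightarrow> real" where
  "mesh \<kappa> j = resolution \<kappa> (scale \<kappa> j) / 4"

lemma mesh_pos: "0 < \<kappa> \<Longrightarrow> 0 < mesh \<kappa> j"
  by (simp add: mesh_def resolution_pos)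

definition steep_increment :: "real \<Rightarrow> (nat \<Rightarrow> real) \<Rightarrow> nat \<Rightarrow> bool" where
  "steep_increment \<kappa> x N \<longleftrightarrow> (\<exists>j \<le> 4. \<exists>m. real m * mesh \<kappa> j \<le> 4 / \<kappa> \<and>
     16 * mesh \<kappa> j \<le> pair_corr x ((real m + 6) * mesh \<kappa> j) N - pair_corr x (real m * mesh \<kappa> j) N)"

theorem pair_corr_jump_of_overlap:
  assumes \<kappa>: "0 < \<kappa>" "\<kappa> \<le> 1" and x: "\<forall>n\<ge>1. 0 \<le> x n \<and> x n < 1" and N: "8 / \<kappa> \<le> real N"
    and Y: "finite Y" "card Y \<le> N"
    and G: "finite G" "card G \<le> 4" "\<forall>(a, b) \<in> neighbours Y. b - a \<in> G"
    and overlap: "\<kappa> * real N \<le> real (card (x ` {1..N} \<inter> Y))"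
  shows "steep_increment \<kappa> x N"
proof -
  define C where "C = x ` {1..N} \<inter> Y"
  interpret overlap_with_few_gaps \<kappa> N Y C G
    using assms unfolding C_def by unfold_locales auto
  obtain j where j: "j \<le> 4" "free_level j" using exists_free_level by blast
  define \<epsilon> where "\<epsilon> = mesh \<kappa> j"
  have \<epsilon>: "0 < \<epsilon>" unfolding \<epsilon>_def using mesh_pos[OF \<kappa>_pos] .
  obtain D where D: "0 \<le> D" "D < 4 / \<kappa>" and card_ge: "16 * \<epsilon> * real N \<le> real (card
      {e \<in> neighbours C. D \<le> scaled_gap e \<and> scaled_gap e < D + 4 * \<epsilon> \<and> scaled_gap e < 4 / \<kappa>})"
    using clustered_neighbours[OF j(2)] unfolding \<epsilon>_def mesh_def by auto
  obtain m where m: "real m * \<epsilon> \<le> D"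
    and grid: "\<And>t. 0 < t \<Longrightarrow> D \<le> t \<Longrightarrow> t < D + 4 * \<epsilon> \<Longrightarrow> real m * \<epsilon> < t \<and> t \<le> (real m + 6) * \<epsilon>"
    using grid_point_below[OF \<epsilon> D(1)] by blast
  let ?Q = "{e \<in> neighbours C. D \<le> scaled_gap e \<and> scaled_gap e < D + 4 * \<epsilon> \<and> scaled_gap e < 4 / \<kappa>}"
  have "real (card ?Q) / real N \<le> pair_corr x ((real m + 6) * \<epsilon>) N - pair_corr x (real m * \<epsilon>) N"
  proof (rule pair_corr_increment_ge)
    show "0 < N" using N_pos by simp
    show "0 \<le> real m * \<epsilon>" "real m * \<epsilon> \<le> (real m + 6) * \<epsilon>" using \<epsilon> by simp_all
    fix p q assume "(p, q) \<in> ?Q"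
    then have pq: "p \<in> C" "q \<in> C" "p < q" "D \<le> real N * (q - p)" "real N * (q - p) < D + 4 * \<epsilon>"
      "real N * (q - p) < 4 / \<kappa>"
      by (auto simp: neighbours_def scaled_gap_def)
    have "real N * (q - p) < real N * (1 / 2)" using pq(6) N by simp
    then have "q - p \<le> 1 / 2" using N_pos by simp
    moreover have "0 < real N * (q - p)" using pq(3) N_pos by simp
    ultimately show "p \<in> x ` {1..N} \<and> q \<in> x ` {1..N} \<and> real m * \<epsilon> < real N * (q - p)
        \<and> real N * (q - p) \<le> (real m + 6) * \<epsilon> \<and> q - p \<le> 1 / 2"
      using grid[of "real N * (q - p)"] pq unfolding C_def by auto
  qed
  moreover have "16 * \<epsilon> \<le> real (card ?Q) / real N" using card_ge N_pos by (simp add: field_simps)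
  ultimately have "16 * \<epsilon> \<le> pair_corr x ((real m + 6) * \<epsilon>) N - pair_corr x (real m * \<epsilon>) N"
    by linarith
  moreover have "real m * \<epsilon> \<le> 4 / \<kappa>" using m D(2) by linarith
  ultimately show ?thesis using j(1) unfolding steep_increment_def \<epsilon>_def by blast
qed

section \<open>Contradiction with Poissonian pair correlations\<close>

lemma poissonian_pair_corr_increments:
  assumes "poissonian_pair_corr x" and "0 < \<kappa>"
  shows "\<forall>\<^sub>F N in sequentially. \<not> steep_increment \<kappa> x N"
proof -
  define grid where "grid j = (\<lambda>m. real m * mesh \<kappa> j) ` {..nat \<lceil>4 / \<kappa> / mesh \<kappa> j\<rceil> + 6}" for j
  have "\<forall>\<^sub>F N in sequentially. \<forall>s \<in> grid j. \<bar>pair_corr x s N - 2 * s\<bar> < mesh \<kappa> j" for j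
    using mesh_pos[OF assms(2), of j] unfolding grid_def
    by (intro poissonian_pair_corr_eventually_close[OF assms(1)]) auto
  then have close: "\<forall>\<^sub>F N in sequentially. \<forall>j \<in> {..4}. \<forall>s \<in> grid j.
      \<bar>pair_corr x s N - 2 * s\<bar> < mesh \<kappa> j"
    by (intro eventually_ball_finite) auto
  have grid: "real m * mesh \<kappa> j \<in> grid j \<and> (real m + 6) * mesh \<kappa> j \<in> grid j"
    if "real m * mesh \<kappa> j \<le> 4 / \<kappa>" for j m
  proof -
    have "real m \<le> 4 / \<kappa> / mesh \<kappa> j"
      using that by (simp only: pos_le_divide_eq[OF mesh_pos[OF assms(2)]])
    then have "int m \<le> \<lceil>4 / \<kappa> / mesh \<kappa> j\<rceil>" by (simp add: le_ceiling_iff)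
    then have "m \<le> nat \<lceil>4 / \<kappa> / mesh \<kappa> j\<rceil>" by (metis nat_int nat_mono)
    then show ?thesis unfolding grid_def by (auto intro: image_eqI[of _ _ m] image_eqI[of _ _ "m + 6"])
  qed
  show ?thesis
    using close
  proof (rule eventually_mono)
    fix N assume close_N: "\<forall>j \<in> {..4}. \<forall>s \<in> grid j. \<bar>pair_corr x s N - 2 * s\<bar> < mesh \<kappa> j"
    have "pair_corr x ((real m + 6) * mesh \<kappa> j) N - pair_corr x (real m * mesh \<kappa> j) N < 16 * mesh \<kappa> j"
      if "j \<le> 4" "real m * mesh \<kappa> j \<le> 4 / \<kappa>" for j m
    proof -
      have "\<bar>pair_corr x ((real m + 6) * mesh \<kappa> j) N - 2 * ((real m + 6) * mesh \<kappa> j)\<bar> < mesh \<kappa> j"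
        "\<bar>pair_corr x (real m * mesh \<kappa> j) N - 2 * (real m * mesh \<kappa> j)\<bar> < mesh \<kappa> j"
        using close_N grid that by auto
      then show ?thesis by (simp add: abs_less_iff algebra_simps)
    qed
    then show "\<not> steep_increment \<kappa> x N" unfolding steep_increment_def by (meson not_le)
  qed
qed

theorem corollary2:
  fixes x :: "nat \<Rightarrow> real"
  assumes "\<forall>n\<ge>1. 0 \<le> x n \<and> x n < 1"
    and "\<exists>\<kappa>::real. \<kappa> > 0 \<and> (\<exists>N :: nat \<Rightarrow> nat. strict_mono N \<and> (\<forall>i. N i > 0) \<and>
          (\<exists>y :: nat \<Rightarrow> nat \<Rightarrow> real. \<forall>i. is_LS_sequence (y i) \<and>
             real (card (x ` {1..N i} \<inter> y i ` {1..N i})) \<ge> \<kappa> * real (N i)))"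
  shows "\<not> poissonian_pair_corr x"
proof
  assume poissonian: "poissonian_pair_corr x"
  obtain \<kappa>0 :: real and Ns :: "nat \<Rightarrow> nat" and y :: "nat \<Rightarrow> nat \<Rightarrow> real" where
    "0 < \<kappa>0" "strict_mono Ns" and y: "\<And>i. is_LS_sequence (y i)"
    and overlap: "\<And>i. \<kappa>0 * real (Ns i) \<le> real (card (x ` {1..Ns i} \<inter> y i ` {1..Ns i}))"
    using assms(2) by blast
  define \<kappa> where "\<kappa> = min \<kappa>0 1"
  have \<kappa>: "0 < \<kappa>" "\<kappa> \<le> 1" using \<open>0 < \<kappa>0\<close> by (auto simp: \<kappa>_def)
  have "\<forall>\<^sub>F N in sequentially. \<not> steep_increment \<kappa> x N \<and> 8 / \<kappa> \<le> real N"
    using poissonian_pair_corr_increments[OF poissonian \<kappa>(1)] eventually_ge_at_top[of "nat \<lceil>8 / \<kappa>\<rceil>"]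
    by eventually_elim linarith
  then obtain i where "\<not> steep_increment \<kappa> x (Ns i)" and large: "8 / \<kappa> \<le> real (Ns i)"
    using strict_mono_eventually_witness[OF \<open>strict_mono Ns\<close>] by blast
  obtain G where G: "finite G" "card G \<le> 4" "\<forall>(p, q) \<in> neighbours (y i ` {1..Ns i}). q - p \<in> G"
    using LS_sequence_gaps[OF y] by blast
  have "card (y i ` {1..Ns i}) \<le> Ns i" using card_image_le[of "{1..Ns i}" "y i"] by simp
  moreover have "\<kappa> * real (Ns i) \<le> real (card (x ` {1..Ns i} \<inter> y i ` {1..Ns i}))"
    using overlap[of i] mult_right_mono[of \<kappa> \<kappa>0 "real (Ns i)"] by (simp add: \<kappa>_def)
  ultimately have "steep_increment \<kappa> x (Ns i)"
    by (intro pair_corr_jump_of_overlap[OF \<kappa> assms(1) large finite_imageI[OF finite_atLeastAtMost] _ G])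
  with \<open>\<not> steep_increment \<kappa> x (Ns i)\<close> show False by contradiction
qed

end
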